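(* Let $\Sigma$ be a fan of rational simplicial cones in $\Lambda_{\mathbb Q}$ whose support is the entire positive Weyl chamber $\Lambda^+_{\mathbb Q}$. If $\Sigma$ is a normal fan, then $W\Sigma$ is a normal fan.
   Context: $G$ is a split reductive group with maximal torus $T$, cocharacter lattice $\Lambda$, Weyl group $W$ acting on $\Lambda_{\mathbb Q}=\Lambda\otimes\mathbb Q$, and positive Weyl chamber $\Lambda^+_{\mathbb Q}$. $W\Sigma$ denotes the fan consisting of all cones $w\sigma$ for $w\in W$, $\sigma\in\Sigma$. A rational polyhedral fan is a normal fan if it consists of the normal cones of some polyhedron, equivalently if its support is convex and admits a strictly convex piecewise linear function to $\mathbb Q$ that is linear on each cone of the fan. *)

theory Defs
  imports Complex_Main
begin

text \<open>
  The cocharacter lattice of the split maximal torus is identified with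
  the functions 'n => int for a finite index type 'n (a basis of Lambda), the character
  lattice with its dual, also 'n => int, paired by the standard pairing.
  Lambda_Q is 'n => rat.  A split reductive group is recorded through its (reduced)
  root datum (roots Phi in the characters, coroot map cor into the cocharacters);
  every reduced root datum comes from a split reductive group and conversely.
\<close>

definition pair :: "('n::finite \<Rightarrow> rat) \<Rightarrow> ('n \<Rightarrow> rat) \<Rightarrow> rat" where
  "pair u x = (\<Sum>i\<in>UNIV. u i * x i)"

definition ipair :: "('n::finite \<Rightarrow> int) \<Rightarrow> ('n \<Rightarrow> int) \<Rightarrow> int" where
  "ipair a x = (\<Sum>i\<in>UNIV. a i * x i)"

definition refl_char :: "('n::finite \<Rightarrow> int) \<Rightarrow> ('n \<Rightarrow> int) \<Rightarrow> ('n \<Rightarrow> int) \<Rightarrow> ('n \<Rightarrow> int)" where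
  "refl_char a acv chi = (\<lambda>i. chi i - ipair chi acv * a i)"

definition refl_cochar :: "('n::finite \<Rightarrow> int) \<Rightarrow> ('n \<Rightarrow> int) \<Rightarrow> ('n \<Rightarrow> int) \<Rightarrow> ('n \<Rightarrow> int)" where
  "refl_cochar a acv lam = (\<lambda>i. lam i - ipair a lam * acv i)"

definition root_datum :: "('n::finite \<Rightarrow> int) set \<Rightarrow> (('n \<Rightarrow> int) \<Rightarrow> ('n \<Rightarrow> int)) \<Rightarrow> bool" where
  "root_datum Phi cor \<longleftrightarrow>
     finite Phi \<and> inj_on cor Phi \<and>
     (\<forall>a\<in>Phi. ipair a (cor a) = 2) \<and>
     (\<forall>a\<in>Phi. \<forall>b\<in>Phi. refl_char a (cor a) b \<in> Phi) \<and>
     (\<forall>a\<in>Phi. \<forall>b\<in>Phi. refl_cochar a (cor a) (cor b) \<in> cor ` Phi)"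

definition reduced_root_datum :: "('n::finite \<Rightarrow> int) set \<Rightarrow> (('n \<Rightarrow> int) \<Rightarrow> ('n \<Rightarrow> int)) \<Rightarrow> bool" where
  "reduced_root_datum Phi cor \<longleftrightarrow> root_datum Phi cor \<and> (\<forall>a\<in>Phi. (\<lambda>i. 2 * a i) \<notin> Phi)"

definition refl_Q :: "('n::finite \<Rightarrow> int) \<Rightarrow> ('n \<Rightarrow> int) \<Rightarrow> ('n \<Rightarrow> rat) \<Rightarrow> ('n \<Rightarrow> rat)" where
  "refl_Q a acv x = (\<lambda>i. x i - pair (\<lambda>j. of_int (a j)) x * of_int (acv i))"

inductive_set weyl_group :: "('n::finite \<Rightarrow> int) set \<Rightarrow> (('n \<Rightarrow> int) \<Rightarrow> ('n \<Rightarrow> int))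
    \<Rightarrow> (('n \<Rightarrow> rat) \<Rightarrow> ('n \<Rightarrow> rat)) set"
  for Phi cor where
  id: "id \<in> weyl_group Phi cor"
| refl: "w \<in> weyl_group Phi cor \<Longrightarrow> a \<in> Phi \<Longrightarrow> refl_Q a (cor a) \<circ> w \<in> weyl_group Phi cor"

text \<open>positive Weyl chamber, for the positive system determined by a regular element v\<close>
definition regular :: "('n::finite \<Rightarrow> int) set \<Rightarrow> ('n \<Rightarrow> rat) \<Rightarrow> bool" where
  "regular Phi v \<longleftrightarrow> (\<forall>a\<in>Phi. pair (\<lambda>j. of_int (a j)) v \<noteq> 0)"

definition positive_roots :: "('n::finite \<Rightarrow> int) set \<Rightarrow> ('n \<Rightarrow> rat) \<Rightarrow> ('n \<Rightarrow> int) set" where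
  "positive_roots Phi v = {a\<in>Phi. pair (\<lambda>j. of_int (a j)) v > 0}"

definition pos_chamber :: "('n::finite \<Rightarrow> int) set \<Rightarrow> ('n \<Rightarrow> rat) \<Rightarrow> ('n \<Rightarrow> rat) set" where
  "pos_chamber Phi v = {x. \<forall>a\<in>positive_roots Phi v. pair (\<lambda>j. of_int (a j)) x \<ge> 0}"

definition cone_gen :: "('n::finite \<Rightarrow> rat) set \<Rightarrow> ('n \<Rightarrow> rat) set" where
  "cone_gen S = {x. \<exists>c. (\<forall>s\<in>S. c s \<ge> 0) \<and> x = (\<lambda>i. \<Sum>s\<in>S. c s * s i)}"

definition lin_indep :: "('n::finite \<Rightarrow> rat) set \<Rightarrow> bool" where
  "lin_indep S \<longleftrightarrow> (\<forall>c. (\<lambda>i. \<Sum>s\<in>S. c s * s i) = (\<lambda>i. 0) \<longrightarrow> (\<forall>s\<in>S. c s = 0))"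

definition polyhedral_cone :: "('n::finite \<Rightarrow> rat) set \<Rightarrow> bool" where
  "polyhedral_cone C \<longleftrightarrow> (\<exists>S. finite S \<and> C = cone_gen S)"

definition simplicial_cone :: "('n::finite \<Rightarrow> rat) set \<Rightarrow> bool" where
  "simplicial_cone C \<longleftrightarrow> (\<exists>S. finite S \<and> lin_indep S \<and> C = cone_gen S)"

definition face_of_cone :: "('n::finite \<Rightarrow> rat) set \<Rightarrow> ('n \<Rightarrow> rat) set \<Rightarrow> bool" where
  "face_of_cone F C \<longleftrightarrow> (\<exists>u. (\<forall>x\<in>C. pair u x \<ge> 0) \<and> F = {x\<in>C. pair u x = 0})"

definition fan :: "('n::finite \<Rightarrow> rat) set set \<Rightarrow> bool" where
  "fan Sig \<longleftrightarrow> finite Sig \<and> (\<forall>C\<in>Sig. polyhedral_cone C) \<and>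
     (\<forall>C\<in>Sig. \<forall>F. face_of_cone F C \<longrightarrow> F \<in> Sig) \<and>
     (\<forall>C\<in>Sig. \<forall>D\<in>Sig. face_of_cone (C \<inter> D) C \<and> face_of_cone (C \<inter> D) D)"

definition support :: "('n::finite \<Rightarrow> rat) set set \<Rightarrow> ('n \<Rightarrow> rat) set" where
  "support Sig = \<Union>Sig"

definition convex_set :: "('n::finite \<Rightarrow> rat) set \<Rightarrow> bool" where
  "convex_set S \<longleftrightarrow> (\<forall>x\<in>S. \<forall>y\<in>S. \<forall>t::rat. 0 \<le> t \<and> t \<le> 1 \<longrightarrow> (\<lambda>i. t * x i + (1 - t) * y i) \<in> S)"

definition strictly_convex_pl :: "('n::finite \<Rightarrow> rat) set set \<Rightarrow> (('n \<Rightarrow> rat) \<Rightarrow> rat) \<Rightarrow> bool" where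
  "strictly_convex_pl Sig f \<longleftrightarrow>
     (\<forall>C\<in>Sig. \<exists>u. \<forall>x\<in>C. f x = pair u x) \<and>
     (\<forall>x\<in>support Sig. \<forall>y\<in>support Sig. \<forall>t::rat. 0 \<le> t \<and> t \<le> 1 \<longrightarrow>
         f (\<lambda>i. t * x i + (1 - t) * y i) \<le> t * f x + (1 - t) * f y) \<and>
     (\<forall>C\<in>Sig. \<exists>u. \<forall>x\<in>support Sig. pair u x \<le> f x \<and> (pair u x = f x \<longleftrightarrow> x \<in> C))"

definition normal_fan :: "('n::finite \<Rightarrow> rat) set set \<Rightarrow> bool" where
  "normal_fan Sig \<longleftrightarrow> fan Sig \<and> convex_set (support Sig) \<and> (\<exists>f. strictly_convex_pl Sig f)"

definition weyl_fan :: "('n::finite \<Rightarrow> int) set \<Rightarrow> (('n \<Rightarrow> int) \<Rightarrow> ('n \<Rightarrow> int))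
    \<Rightarrow> ('n \<Rightarrow> rat) set set \<Rightarrow> ('n \<Rightarrow> rat) set set" where
  "weyl_fan Phi cor Sig = {w ` C | w C. w \<in> weyl_group Phi cor \<and> C \<in> Sig}"

end

theory Submission
  imports Defs
begin

text \<open>
  Two facts about the Weyl group drive the proof: every vector is \<open>W\<close>-conjugate to exactly one
  point of the dominant chamber, and for dominant \<open>x\<close> the difference \<open>x - w x\<close> is a nonnegative
  combination of positive coroots. Both come from the usual theory of simple roots and reduced
  words, developed here directly from the root datum with the help of \<open>W\<close>-invariant forms.

  The first fact makes the cones \<open>w \<sigma>\<close> a fan covering the whole space: the intersection of
  \<open>\<sigma>\<close> with \<open>w \<tau>\<close> consists of the points of the face \<open>\<sigma> \<inter> \<tau>\<close> fixed by \<open>w\<close>, which is again a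
  face, cut out by \<open>\<rho> - w\<^sup>T \<rho>\<close>. For normality, let \<open>f\<close> be strictly convex on \<open>\<Sigma>\<close> with
  supporting linear forms \<open>\<ell>\<^sub>\<sigma>\<close>. For a large \<open>M\<close> all forms \<open>\<ell>\<^sub>\<sigma> + M \<rho>\<close> are strictly positive on
  positive coroots. Then the maximum \<open>F y\<close> of \<open>(\<ell>\<^sub>\<sigma> + M \<rho>)(w y)\<close> over \<open>w \<in> W\<close>, \<open>\<sigma> \<in> \<Sigma>\<close> is a
  \<open>W\<close>-invariant convex function which agrees with \<open>f + M \<rho>\<close> on the chamber and whose supporting
  forms cut out exactly the cones \<open>w \<sigma>\<close>.
\<close>

section \<open>Vectors, pairing and cones\<close>

definition ratvec :: "('n \<Rightarrow> int) \<Rightarrow> 'n \<Rightarrow> rat" where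
  "ratvec a = (\<lambda>j. of_int (a j))"

lemma pair_commute: "pair u x = pair x u"
  unfolding pair_def by (simp add: mult.commute)

lemma pair_add_right: "pair u (\<lambda>i. x i + y i) = pair u x + pair u y"
  unfolding pair_def by (simp add: distrib_left sum.distrib)

lemma pair_diff_right: "pair u (\<lambda>i. x i - y i) = pair u x - pair u y"
  unfolding pair_def by (simp add: right_diff_distrib sum_subtractf)

lemma pair_scale_right: "pair u (\<lambda>i. c * x i) = c * pair u x"
  unfolding pair_def by (simp add: sum_distrib_left algebra_simps)

lemma pair_sum_right: "pair u (\<lambda>i. \<Sum>s\<in>S. f s i) = (\<Sum>s\<in>S. pair u (f s))"
  unfolding pair_def by (simp add: sum_distrib_left sum.swap[of _ S])

lemma pair_add_left: "pair (\<lambda>i. x i + y i) u = pair x u + pair y u"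
  by (subst (1 2 3) pair_commute) (rule pair_add_right)

lemma pair_diff_left: "pair (\<lambda>i. x i - y i) u = pair x u - pair y u"
  by (subst (1 2 3) pair_commute) (rule pair_diff_right)

lemma pair_scale_left: "pair (\<lambda>i. c * x i) u = c * pair x u"
  by (subst (1 2) pair_commute) (rule pair_scale_right)

lemma pair_sum_left: "pair (\<lambda>i. \<Sum>s\<in>S. f s i) u = (\<Sum>s\<in>S. pair (f s) u)"
  by (subst pair_commute, subst pair_sum_right, simp add: pair_commute)

lemma pair_minus_left: "pair (\<lambda>i. - x i) y = - pair x y"
  unfolding pair_def by (simp add: sum_negf)

lemma pair_zero_right [simp]: "pair u (\<lambda>i. 0) = 0"
  unfolding pair_def by simp

lemma eq_if_pair_eq:
  assumes "\<And>u. pair u x = pair u y"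
  shows "x = y"
proof
  fix k
  have "pair (\<lambda>j. if j = k then 1 else 0) z = z k" for z :: "'a \<Rightarrow> rat"
    unfolding pair_def by (simp add: if_distrib[of "\<lambda>t. t * z _"] cong: if_cong)
  then show "x k = y k"
    using assms[of "\<lambda>j. if j = k then 1 else 0"] by simp
qed

lemma pair_ratvec: "pair (ratvec a) (ratvec b) = of_int (ipair a b)"
  unfolding pair_def ratvec_def ipair_def by simp

lemma ratvec_inj: "ratvec a = ratvec b \<Longrightarrow> a = b"
  unfolding ratvec_def by (metis of_int_eq_iff ext)

lemma ratvec_minus: "ratvec (\<lambda>i. - a i) = (\<lambda>i. - ratvec a i)"
  unfolding ratvec_def by simp

lemma ratvec_double: "ratvec (\<lambda>i. 2 * a i) = (\<lambda>i. 2 * ratvec a i)"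
  unfolding ratvec_def by simp

lemma sum_reindex_involution:
  assumes "\<And>x. x \<in> S \<Longrightarrow> t x \<in> S" and "\<And>x. x \<in> S \<Longrightarrow> t (t x) = x"
  shows "(\<Sum>x\<in>S. g (t x)) = (\<Sum>x\<in>S. g x)"
  by (rule sum.reindex_bij_witness[where i=t and j=t]) (use assms in auto)

definition nonneg_comb :: "('a \<Rightarrow> 'n \<Rightarrow> rat) \<Rightarrow> 'a set \<Rightarrow> ('n \<Rightarrow> rat) \<Rightarrow> bool" where
  "nonneg_comb g S x \<longleftrightarrow> (\<exists>c. (\<forall>s\<in>S. 0 \<le> c s) \<and> x = (\<lambda>i. \<Sum>s\<in>S. c s * g s i))"

lemma nonneg_comb_generator:
  assumes "finite S" and "a \<in> S"
  shows "nonneg_comb g S (g a)"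
  unfolding nonneg_comb_def
  by (rule exI[of _ "\<lambda>s. if s = a then 1 else 0"])
     (simp add: assms if_distrib[of "\<lambda>t. t * _"] cong: if_cong)

lemma nonneg_comb_add_generator:
  assumes S: "finite S" "a \<in> S" and x: "nonneg_comb g S x" and t: "0 \<le> t"
  shows "nonneg_comb g S (\<lambda>i. x i + t * g a i)"
proof -
  obtain c where c0: "\<forall>s\<in>S. 0 \<le> c s" and c: "x = (\<lambda>i. \<Sum>s\<in>S. c s * g s i)"
    using x unfolding nonneg_comb_def by blast
  let ?c = "c(a := c a + t)"
  have "x i + t * g a i = (\<Sum>s\<in>S. ?c s * g s i)" for i
  proof -
    have "(\<Sum>s\<in>S - {a}. ?c s * g s i) = (\<Sum>s\<in>S - {a}. c s * g s i)"
      by (rule sum.cong) auto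
    then show ?thesis
      using sum.remove[OF S, of "\<lambda>s. c s * g s i"] sum.remove[OF S, of "\<lambda>s. ?c s * g s i"]
      by (simp add: c algebra_simps)
  qed
  moreover have "\<forall>s\<in>S. 0 \<le> ?c s" using c0 t by simp
  ultimately show ?thesis unfolding nonneg_comb_def by blast
qed

lemma nonneg_comb_remove:
  assumes S: "finite S" "a \<in> S" and ga: "nonneg_comb g (S - {a}) (g a)"
    and x: "nonneg_comb g S x"
  shows "nonneg_comb g (S - {a}) x"
proof -
  obtain e where e0: "\<forall>s\<in>S - {a}. 0 \<le> e s" and e: "g a = (\<lambda>i. \<Sum>s\<in>S - {a}. e s * g s i)"
    using ga unfolding nonneg_comb_def by blast
  obtain c where c0: "\<forall>s\<in>S. 0 \<le> c s" and c: "x = (\<lambda>i. \<Sum>s\<in>S. c s * g s i)"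
    using x unfolding nonneg_comb_def by blast
  have "x i = (\<Sum>s\<in>S - {a}. (c s + c a * e s) * g s i)" for i
  proof -
    have "x i = c a * g a i + (\<Sum>s\<in>S - {a}. c s * g s i)"
      using c sum.remove[OF S, of "\<lambda>s. c s * g s i"] by simp
    also have "c a * g a i = (\<Sum>s\<in>S - {a}. c a * e s * g s i)"
      by (subst e) (simp add: sum_distrib_left mult.assoc)
    finally show ?thesis by (simp add: sum.distrib algebra_simps)
  qed
  moreover have "\<forall>s\<in>S - {a}. 0 \<le> c s + c a * e s" using c0 e0 S(2) by auto
  ultimately show ?thesis unfolding nonneg_comb_def by (intro exI[of _ "\<lambda>s. c s + c a * e s"]) auto
qed

lemma pair_nonneg_comb:
  assumes "nonneg_comb g S x"
  obtains c where "\<forall>s\<in>S. 0 \<le> c s" and "pair u x = (\<Sum>s\<in>S. c s * pair u (g s))"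
    and "(\<forall>s\<in>S. c s = 0) \<Longrightarrow> x = (\<lambda>i. 0)"
  using assms unfolding nonneg_comb_def by (auto simp: pair_sum_right pair_scale_right)

lemma pair_nonneg_comb_nonneg:
  assumes "nonneg_comb g S x" and "\<forall>s\<in>S. 0 \<le> pair u (g s)"
  shows "0 \<le> pair u x"
  using assms by (auto elim!: pair_nonneg_comb[where u=u] intro!: sum_nonneg)

lemma pair_nonneg_comb_pos:
  assumes "finite S" and "nonneg_comb g S x" and "\<forall>s\<in>S. 0 < pair u (g s)"
    and "x \<noteq> (\<lambda>i. 0)"
  shows "0 < pair u x"
proof -
  obtain c where c0: "\<forall>s\<in>S. 0 \<le> c s" and x: "pair u x = (\<Sum>s\<in>S. c s * pair u (g s))"
    and zero: "(\<forall>s\<in>S. c s = 0) \<Longrightarrow> x = (\<lambda>i. 0)"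
    using pair_nonneg_comb[OF assms(2)] by blast
  obtain s where s: "s \<in> S" "c s \<noteq> 0" using zero assms(4) by blast
  have "0 < c s * pair u (g s)" using s c0 assms(3) by auto
  also have "\<dots> \<le> pair u x" unfolding x
    by (rule member_le_sum) (use s c0 assms(1,3) in \<open>auto intro: less_imp_le\<close>)
  finally show ?thesis .
qed

definition linear_map :: "(('n \<Rightarrow> rat) \<Rightarrow> ('m \<Rightarrow> rat)) \<Rightarrow> bool" where
  "linear_map f \<longleftrightarrow> (\<forall>c d x y. f (\<lambda>i. c * x i + d * y i) = (\<lambda>i. c * f x i + d * f y i))"

lemma linear_map_sum:
  assumes f: "linear_map f" and S: "finite S"
  shows "f (\<lambda>i. \<Sum>s\<in>S. c s * g s i) = (\<lambda>i. \<Sum>s\<in>S. c s * f (g s) i)"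
  using S
proof (induction S rule: finite_induct)
  case empty
  show ?case using f[unfolded linear_map_def, rule_format, of 0 "\<lambda>i. 0" 0 "\<lambda>i. 0"] by simp
next
  case (insert a S)
  then show ?case
    using f[unfolded linear_map_def, rule_format, of "c a" "g a" 1 "\<lambda>i. \<Sum>s\<in>S. c s * g s i"]
    by simp
qed

lemma cone_gen_image:
  assumes f: "linear_map f" and "inj f" and S: "finite S"
  shows "f ` cone_gen S = cone_gen (f ` S)"
proof
  have inj: "inj_on f S" using \<open>inj f\<close> inj_on_subset by blast
  show "f ` cone_gen S \<subseteq> cone_gen (f ` S)"
  proof
    fix y assume "y \<in> f ` cone_gen S"
    then obtain c where c0: "\<forall>s\<in>S. 0 \<le> c s" and y: "y = f (\<lambda>i. \<Sum>s\<in>S. c s * s i)"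
      unfolding cone_gen_def by blast
    define c' where "c' = (\<lambda>t. c (inv_into S f t))"
    have c': "c' (f s) = c s" if "s \<in> S" for s
      unfolding c'_def using inv_into_f_f[OF inj that] by simp
    have "y = (\<lambda>i. \<Sum>s\<in>S. c s * f s i)"
      using y linear_map_sum[OF f S, of c "\<lambda>s. s"] by simp
    also have "\<dots> = (\<lambda>i. \<Sum>s\<in>S. c' (f s) * f s i)"
      by (intro ext sum.cong) (simp_all add: c')
    also have "\<dots> = (\<lambda>i. \<Sum>t\<in>f ` S. c' t * t i)"
      by (simp add: sum.reindex[OF inj])
    finally have "y = (\<lambda>i. \<Sum>t\<in>f ` S. c' t * t i)" .
    moreover have "\<forall>t\<in>f ` S. 0 \<le> c' t"
      using c0 c' by auto
    ultimately show "y \<in> cone_gen (f ` S)" unfolding cone_gen_def by blast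
  qed
  show "cone_gen (f ` S) \<subseteq> f ` cone_gen S"
  proof
    fix y assume "y \<in> cone_gen (f ` S)"
    then obtain c where c0: "\<forall>t\<in>f ` S. 0 \<le> c t" and y: "y = (\<lambda>i. \<Sum>t\<in>f ` S. c t * t i)"
      unfolding cone_gen_def by blast
    have "y = f (\<lambda>i. \<Sum>s\<in>S. c (f s) * s i)"
      using y linear_map_sum[OF f S, of "\<lambda>s. c (f s)" "\<lambda>s. s"] by (simp add: sum.reindex[OF inj])
    moreover have "(\<lambda>i. \<Sum>s\<in>S. c (f s) * s i) \<in> cone_gen S"
      unfolding cone_gen_def using c0 by auto
    ultimately show "y \<in> f ` cone_gen S" by (rule image_eqI)
  qed
qed

lemma face_of_cone_restrict:
  assumes F: "face_of_cone F C" and u: "\<forall>x\<in>C. 0 \<le> pair u x"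
  shows "face_of_cone {x\<in>F. pair u x = 0} C"
proof -
  obtain u' where u'0: "\<forall>x\<in>C. 0 \<le> pair u' x" and F': "F = {x\<in>C. pair u' x = 0}"
    using F unfolding face_of_cone_def by blast
  have "\<forall>x\<in>C. 0 \<le> pair (\<lambda>i. u' i + u i) x"
    using u u'0 by (simp add: pair_add_left)
  moreover have "pair u' x + pair u x = 0 \<longleftrightarrow> pair u' x = 0 \<and> pair u x = 0" if "x \<in> C" for x
    using that u u'0 by (simp add: add_nonneg_eq_0_iff)
  then have "{x\<in>F. pair u x = 0} = {x\<in>C. pair (\<lambda>i. u' i + u i) x = 0}"
    by (auto simp: F' pair_add_left)
  ultimately show ?thesis unfolding face_of_cone_def by blast
qed

lemma face_of_cone_preimage:
  assumes transp: "\<And>u. \<exists>u'. \<forall>x. pair u (f x) = pair u' x" and F: "face_of_cone F (f ` C)"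
  shows "\<exists>G. face_of_cone G C \<and> F = f ` G"
proof -
  obtain u where u0: "\<forall>y\<in>f ` C. 0 \<le> pair u y" and F_eq: "F = {y\<in>f ` C. pair u y = 0}"
    using F unfolding face_of_cone_def by blast
  obtain u' where u': "\<forall>x. pair u (f x) = pair u' x" using transp by blast
  define G where "G = {x\<in>C. pair u' x = 0}"
  have "face_of_cone G C"
    using u0 u' unfolding face_of_cone_def G_def by (intro exI[of _ u']) auto
  moreover have "F = f ` G" using u' unfolding F_eq G_def by auto
  ultimately show ?thesis by blast
qed

lemma face_of_cone_image:
  assumes transp: "\<And>u. \<exists>u'. \<forall>x. pair u (g x) = pair u' x"
    and gf: "\<And>x. g (f x) = x" and fg: "\<And>y. f (g y) = y" and G: "face_of_cone G C"
  shows "face_of_cone (f ` G) (f ` C)"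
proof -
  have "C = g ` (f ` C)" using gf by (simp add: image_image)
  then obtain G' where G': "face_of_cone G' (f ` C)" "G = g ` G'"
    using face_of_cone_preimage[OF transp, of G "f ` C"] G by auto
  have "f ` G = G'" using fg by (simp add: G'(2) image_image)
  then show ?thesis using G'(1) by simp
qed

section \<open>Root data\<close>

lemma int_divisor_of_4:
  fixes m n :: int
  assumes "m * n = 4" and "0 < m"
  shows "m = 1 \<or> m = 2 \<or> m = 4"
proof -
  have "0 < n" using assms zero_less_mult_pos[of m n] by simp
  then have "m * 1 \<le> m * n" using assms(2) by (intro mult_left_mono) auto
  moreover have "m \<noteq> 3"
  proof
    assume "m = 3"
    with assms(1) have "3 * n = 4" by simp
    then show False by presburger
  qed
  ultimately show ?thesis using assms by auto
qed

locale root_chamber =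
  fixes Phi :: "('n::finite \<Rightarrow> int) set" and cor :: "('n \<Rightarrow> int) \<Rightarrow> ('n \<Rightarrow> int)"
    and v :: "'n \<Rightarrow> rat"
  assumes reduced_root_datum: "reduced_root_datum Phi cor" and regular: "regular Phi v"
begin

abbreviation coroot :: "('n \<Rightarrow> int) \<Rightarrow> 'n \<Rightarrow> rat" where
  "coroot a \<equiv> ratvec (cor a)"

abbreviation reflection :: "('n \<Rightarrow> int) \<Rightarrow> ('n \<Rightarrow> rat) \<Rightarrow> 'n \<Rightarrow> rat" where
  "reflection a \<equiv> refl_Q a (cor a)"

abbreviation root_reflection :: "('n \<Rightarrow> int) \<Rightarrow> ('n \<Rightarrow> int) \<Rightarrow> 'n \<Rightarrow> int" where
  "root_reflection a \<equiv> refl_char a (cor a)"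

definition dual_reflection :: "('n \<Rightarrow> int) \<Rightarrow> ('n \<Rightarrow> rat) \<Rightarrow> 'n \<Rightarrow> rat" where
  "dual_reflection a \<chi> = (\<lambda>i. \<chi> i - pair \<chi> (coroot a) * ratvec a i)"

lemma finite_roots: "finite Phi"
  and inj_on_cor: "inj_on cor Phi"
  and ipair_root_coroot: "a \<in> Phi \<Longrightarrow> ipair a (cor a) = 2"
  and root_reflection_root: "a \<in> Phi \<Longrightarrow> b \<in> Phi \<Longrightarrow> root_reflection a b \<in> Phi"
  and coroot_reflection_coroot:
    "a \<in> Phi \<Longrightarrow> b \<in> Phi \<Longrightarrow> refl_cochar a (cor a) (cor b) \<in> cor ` Phi"
  and double_not_root: "a \<in> Phi \<Longrightarrow> (\<lambda>i. 2 * a i) \<notin> Phi"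
  using reduced_root_datum unfolding reduced_root_datum_def root_datum_def by auto

lemma pair_root_coroot: "a \<in> Phi \<Longrightarrow> pair (ratvec a) (coroot a) = 2"
  using ipair_root_coroot by (simp add: pair_ratvec)

lemma reflection_eq: "reflection a x = (\<lambda>i. x i - pair (ratvec a) x * coroot a i)"
  unfolding refl_Q_def ratvec_def by simp

lemma pair_reflection: "pair \<chi> (reflection a x) = pair (dual_reflection a \<chi>) x"
  unfolding reflection_eq dual_reflection_def pair_diff_right pair_scale_right pair_diff_left
    pair_scale_left
  by (simp add: pair_commute)

lemma ratvec_root_reflection: "ratvec (root_reflection a b) = dual_reflection a (ratvec b)"
  unfolding refl_char_def dual_reflection_def ratvec_def
  by (simp add: pair_ratvec[unfolded ratvec_def] ipair_def mult.commute)

lemma pair_root_reflection: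
  "pair (ratvec b) (reflection a x) = pair (ratvec (root_reflection a b)) x"
  by (simp add: pair_reflection ratvec_root_reflection)

lemma ratvec_coroot_reflection: "ratvec (refl_cochar a (cor a) l) = reflection a (ratvec l)"
  unfolding refl_cochar_def reflection_eq ratvec_def
  by (simp add: pair_ratvec[unfolded ratvec_def] ipair_def)

lemma reflection_involutive:
  assumes a: "a \<in> Phi"
  shows "reflection a (reflection a x) = x"
proof -
  have "pair (ratvec a) (reflection a x) = - pair (ratvec a) x"
    unfolding reflection_eq pair_diff_right pair_scale_right using pair_root_coroot[OF a] by simp
  then show ?thesis by (subst (1) reflection_eq) (simp add: reflection_eq)
qed

lemma dual_reflection_involutive: "a \<in> Phi \<Longrightarrow> dual_reflection a (dual_reflection a \<chi>) = \<chi>"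
  using pair_root_coroot[of a]
  by (simp add: dual_reflection_def pair_diff_left pair_scale_left)

lemma root_reflection_involutive: "a \<in> Phi \<Longrightarrow> root_reflection a (root_reflection a b) = b"
  by (rule ratvec_inj) (simp add: ratvec_root_reflection dual_reflection_involutive)

lemma coroot_reflection_involutive:
  "a \<in> Phi \<Longrightarrow> refl_cochar a (cor a) (refl_cochar a (cor a) l) = l"
  by (rule ratvec_inj) (simp add: ratvec_coroot_reflection reflection_involutive)

lemma root_reflection_self: "a \<in> Phi \<Longrightarrow> root_reflection a a = (\<lambda>i. - a i)"
  unfolding refl_char_def using ipair_root_coroot by auto

lemma uminus_root: "a \<in> Phi \<Longrightarrow> (\<lambda>i. - a i) \<in> Phi"
  using root_reflection_root[of a a] root_reflection_self by simp

lemma linear_map_reflection: "linear_map (reflection a)"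
  unfolding linear_map_def reflection_eq
  by (simp add: fun_eq_iff pair_add_right pair_scale_right algebra_simps)

lemma dual_reflection_root: "a \<in> Phi \<Longrightarrow> dual_reflection a (ratvec a) = (\<lambda>i. - ratvec a i)"
  unfolding dual_reflection_def by (simp add: pair_ratvec ipair_root_coroot)

lemma reflection_coroot: "a \<in> Phi \<Longrightarrow> reflection a (coroot a) = (\<lambda>i. - coroot a i)"
  unfolding reflection_eq by (simp add: pair_ratvec ipair_root_coroot)

definition char_form :: "('n \<Rightarrow> rat) \<Rightarrow> ('n \<Rightarrow> rat) \<Rightarrow> rat" where
  "char_form \<chi> \<psi> = (\<Sum>b\<in>Phi. pair \<chi> (coroot b) * pair \<psi> (coroot b))"

definition cochar_form :: "('n \<Rightarrow> rat) \<Rightarrow> ('n \<Rightarrow> rat) \<Rightarrow> rat" where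
  "cochar_form x y = (\<Sum>b\<in>Phi. pair (ratvec b) x * pair (ratvec b) y)"

lemma char_form_commute: "char_form \<chi> \<psi> = char_form \<psi> \<chi>"
  unfolding char_form_def by (simp add: mult.commute)

lemma cochar_form_commute: "cochar_form x y = cochar_form y x"
  unfolding cochar_form_def by (simp add: mult.commute)

lemma char_form_linear:
  "char_form (\<lambda>i. c * \<chi> i + d * \<psi> i) \<phi> = c * char_form \<chi> \<phi> + d * char_form \<psi> \<phi>"
  unfolding char_form_def pair_add_left pair_scale_left
  by (simp add: sum.distrib sum_distrib_left algebra_simps)

lemma cochar_form_linear:
  "cochar_form (\<lambda>i. c * x i + d * y i) z = c * cochar_form x z + d * cochar_form y z"
  unfolding cochar_form_def pair_add_right pair_scale_right
  by (simp add: sum.distrib sum_distrib_left algebra_simps)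

lemma char_form_sum_right:
  "char_form \<chi> (\<lambda>i. \<Sum>d\<in>D. c d * \<psi> d i) = (\<Sum>d\<in>D. c d * char_form \<chi> (\<psi> d))"
  unfolding char_form_def pair_sum_left pair_scale_left sum_distrib_left
  by (subst sum.swap) (simp add: algebra_simps)

lemma sum_coroots_reflection:
  assumes a: "a \<in> Phi"
  shows "(\<Sum>b\<in>Phi. g (reflection a (coroot b))) = (\<Sum>b\<in>Phi. g (coroot b))"
proof -
  let ?t = "refl_cochar a (cor a)"
  have "(\<Sum>b\<in>Phi. g (reflection a (coroot b))) = (\<Sum>c\<in>cor ` Phi. g (ratvec (?t c)))"
    by (simp add: ratvec_coroot_reflection sum.reindex[OF inj_on_cor])
  also have "\<dots> = (\<Sum>c\<in>cor ` Phi. g (ratvec c))"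
    by (rule sum_reindex_involution[where g="\<lambda>c. g (ratvec c)"])
       (use coroot_reflection_coroot[OF a] coroot_reflection_involutive[OF a] in auto)
  also have "\<dots> = (\<Sum>b\<in>Phi. g (coroot b))"
    by (simp add: sum.reindex[OF inj_on_cor])
  finally show ?thesis .
qed

lemma char_form_invariant:
  "a \<in> Phi \<Longrightarrow> char_form (dual_reflection a \<chi>) (dual_reflection a \<psi>) = char_form \<chi> \<psi>"
  unfolding char_form_def pair_reflection[symmetric]
  using sum_coroots_reflection[of a "\<lambda>c. pair \<chi> c * pair \<psi> c"] by simp

lemma cochar_form_invariant:
  assumes a: "a \<in> Phi"
  shows "cochar_form (reflection a x) (reflection a y) = cochar_form x y"
  unfolding cochar_form_def pair_root_reflection
  by (rule sum_reindex_involution[where g="\<lambda>b. pair (ratvec b) x * pair (ratvec b) y"])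
     (use root_reflection_root[OF a] root_reflection_involutive[OF a] in auto)

text \<open>Invariance under the reflection in \<open>a\<close> itself; this recovers the coroot from the root and
  the form.\<close>
lemma char_form_root:
  assumes a: "a \<in> Phi"
  shows "2 * char_form (ratvec a) \<chi> = pair \<chi> (coroot a) * char_form (ratvec a) (ratvec a)"
proof -
  have "char_form (ratvec a) \<chi> = char_form (dual_reflection a (ratvec a)) (dual_reflection a \<chi>)"
    using char_form_invariant[OF a] by simp
  also have "dual_reflection a (ratvec a) = (\<lambda>i. (-1) * ratvec a i + 0 * ratvec a i)"
    using dual_reflection_root[OF a] by simp
  also have "dual_reflection a \<chi> = (\<lambda>i. 1 * \<chi> i + (- pair \<chi> (coroot a)) * ratvec a i)"
    unfolding dual_reflection_def by simp
  finally have "char_form (ratvec a) \<chi> =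
      - (char_form (ratvec a) \<chi> - pair \<chi> (coroot a) * char_form (ratvec a) (ratvec a))"
    unfolding char_form_linear char_form_commute[of _ "\<lambda>i. 1 * \<chi> i + _ * ratvec a i"]
    by (simp add: char_form_commute)
  then show ?thesis by simp
qed

lemma cochar_form_coroot:
  assumes a: "a \<in> Phi"
  shows "2 * cochar_form (coroot a) x = pair (ratvec a) x * cochar_form (coroot a) (coroot a)"
proof -
  have "cochar_form (coroot a) x = cochar_form (reflection a (coroot a)) (reflection a x)"
    using cochar_form_invariant[OF a] by simp
  also have "reflection a (coroot a) = (\<lambda>i. (-1) * coroot a i + 0 * coroot a i)"
    using reflection_coroot[OF a] by simp
  also have "reflection a x = (\<lambda>i. 1 * x i + (- pair (ratvec a) x) * coroot a i)"
    unfolding reflection_eq by simp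
  finally have "cochar_form (coroot a) x =
      - (cochar_form (coroot a) x - pair (ratvec a) x * cochar_form (coroot a) (coroot a))"
    unfolding cochar_form_linear cochar_form_commute[of _ "\<lambda>i. 1 * x i + _ * coroot a i"]
    by (simp add: cochar_form_commute)
  then show ?thesis by simp
qed

lemma char_form_root_root: "a \<in> Phi \<Longrightarrow> 4 \<le> char_form (ratvec a) (ratvec a)"
  using member_le_sum[of a Phi "\<lambda>b. pair (ratvec a) (coroot b) * pair (ratvec a) (coroot b)"]
  by (simp add: char_form_def pair_root_coroot finite_roots)

lemma cochar_form_coroot_coroot: "a \<in> Phi \<Longrightarrow> 4 \<le> cochar_form (coroot a) (coroot a)"
  using member_le_sum[of a Phi "\<lambda>b. pair (ratvec b) (coroot a) * pair (ratvec b) (coroot a)"]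
  by (simp add: cochar_form_def pair_root_coroot finite_roots)

lemma pair_coroot_char_form:
  "a \<in> Phi \<Longrightarrow> pair \<chi> (coroot a) = 2 * char_form (ratvec a) \<chi> / char_form (ratvec a) (ratvec a)"
  using char_form_root[of a \<chi>] char_form_root_root[of a] by (simp add: field_simps)

lemma coroot_root_reflection:
  assumes a: "a \<in> Phi" and b: "b \<in> Phi"
  shows "coroot (root_reflection b a) = reflection b (coroot a)"
proof (rule eq_if_pair_eq)
  fix \<chi>
  let ?B = char_form and ?s = "dual_reflection b"
  have "pair \<chi> (coroot (root_reflection b a)) =
      2 * ?B (?s (ratvec a)) \<chi> / ?B (?s (ratvec a)) (?s (ratvec a))"
    using pair_coroot_char_form[OF root_reflection_root[OF b a]] ratvec_root_reflection by simp
  also have "?B (?s (ratvec a)) \<chi> = ?B (ratvec a) (?s \<chi>)"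
    using char_form_invariant[OF b, of "ratvec a" "?s \<chi>"] dual_reflection_involutive[OF b] by simp
  also have "?B (?s (ratvec a)) (?s (ratvec a)) = ?B (ratvec a) (ratvec a)"
    using char_form_invariant[OF b] by simp
  also have "2 * ?B (ratvec a) (?s \<chi>) / ?B (ratvec a) (ratvec a) = pair (?s \<chi>) (coroot a)"
    using pair_coroot_char_form[OF a] by simp
  finally show "pair \<chi> (coroot (root_reflection b a)) = pair \<chi> (reflection b (coroot a))"
    by (simp add: pair_reflection)
qed

lemma reflection_conj:
  assumes a: "a \<in> Phi" and b: "b \<in> Phi"
  shows "reflection b (reflection a (reflection b x)) = reflection (root_reflection b a) x"
proof -
  have "reflection b (reflection a (reflection b x)) =
      (\<lambda>i. reflection b (reflection b x) i -
        pair (ratvec a) (reflection b x) * reflection b (coroot a) i)"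
    using linear_map_reflection[of b, unfolded linear_map_def, rule_format,
        of 1 "reflection b x" "- pair (ratvec a) (reflection b x)" "coroot a"]
    by (simp add: reflection_eq[of a "reflection b x"])
  also have "\<dots> = (\<lambda>i. x i - pair (ratvec (root_reflection b a)) x * coroot (root_reflection b a) i)"
    by (simp add: reflection_involutive[OF b] coroot_root_reflection[OF a b] pair_root_reflection)
  finally show ?thesis by (simp add: reflection_eq)
qed

lemma reflection_uminus: "a \<in> Phi \<Longrightarrow> reflection (\<lambda>i. - a i) = reflection a"
  using coroot_root_reflection[of a a] root_reflection_self[of a] reflection_coroot[of a]
  by (auto simp: reflection_eq ratvec_minus pair_minus_left)

lemma positive_multiple_root_eq:
  assumes a: "a \<in> Phi" and b: "b \<in> Phi" and t: "0 < t"
    and ba: "ratvec b = (\<lambda>i. t * ratvec a i)"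
  shows "b = a"
proof -
  define m where "m = ipair b (cor a)"
  define n where "n = ipair a (cor b)"
  have "char_form (ratvec b) \<chi> = t * char_form (ratvec a) \<chi>" for \<chi>
    using char_form_linear[of t "ratvec a" 0 "ratvec a" \<chi>] ba by simp
  then have "pair (ratvec a) (coroot b) = 2 / t"
    using pair_coroot_char_form[OF b, of "ratvec a"] char_form_commute[of "ratvec a" "ratvec b"]
      char_form_root_root[OF a] t
    by (simp add: field_simps)
  then have n_eq: "rat_of_int n = 2 / t" by (simp add: n_def pair_ratvec)
  have m_eq: "rat_of_int m = 2 * t"
    using ba pair_scale_left[of t "ratvec a" "coroot a"] pair_root_coroot[OF a]
    by (simp add: m_def pair_ratvec[symmetric])
  have "rat_of_int (m * n) = 4" using m_eq n_eq t by simp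
  then have "m * n = 4" by linarith
  moreover have "0 < m" using m_eq t by (simp flip: of_int_less_iff)
  ultimately consider "m = 1" | "m = 2" | "m = 4" using int_divisor_of_4 by blast
  then show "b = a"
  proof cases
    case 1
    then have "ratvec a = ratvec (\<lambda>i. 2 * b i)"
      using m_eq ba by (auto simp: ratvec_double fun_eq_iff)
    then show ?thesis using ratvec_inj double_not_root[OF b] a by metis
  next
    case 2
    then show ?thesis using m_eq ba by (intro ratvec_inj) (simp add: fun_eq_iff)
  next
    case 3
    then have "ratvec b = ratvec (\<lambda>i. 2 * a i)"
      using m_eq ba by (auto simp: ratvec_double fun_eq_iff)
    then show ?thesis using ratvec_inj double_not_root[OF a] b by metis
  qed
qed

section \<open>Positive and simple roots\<close>

abbreviation Pos :: "('n \<Rightarrow> int) set" where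
  "Pos \<equiv> positive_roots Phi v"

lemma mem_Pos_iff: "a \<in> Pos \<longleftrightarrow> a \<in> Phi \<and> 0 < pair (ratvec a) v"
  unfolding positive_roots_def ratvec_def by auto

lemma Pos_subset: "Pos \<subseteq> Phi"
  by (auto simp: mem_Pos_iff)

lemma finite_Pos: "finite Pos"
  using finite_roots Pos_subset finite_subset by blast

lemma pair_root_v_nonzero: "a \<in> Phi \<Longrightarrow> pair (ratvec a) v \<noteq> 0"
  using regular unfolding regular_def ratvec_def by auto

lemma uminus_in_Pos: "a \<in> Phi \<Longrightarrow> a \<notin> Pos \<Longrightarrow> (\<lambda>i. - a i) \<in> Pos"
  using pair_root_v_nonzero[of a] uminus_root[of a]
  by (auto simp: mem_Pos_iff ratvec_minus pair_minus_left)

lemma uminus_notin_Pos: "a \<in> Pos \<Longrightarrow> (\<lambda>i. - a i) \<notin> Pos"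
  by (auto simp: mem_Pos_iff ratvec_minus pair_minus_left)

definition generates_Pos :: "('n \<Rightarrow> int) set \<Rightarrow> bool" where
  "generates_Pos D \<longleftrightarrow> (\<forall>b\<in>Pos. nonneg_comb ratvec D (ratvec b))"

lemma ex_minimal_generating:
  "\<exists>D. D \<subseteq> Pos \<and> generates_Pos D \<and> (\<forall>a\<in>D. \<not> generates_Pos (D - {a}))"
proof -
  have "generates_Pos Pos"
    unfolding generates_Pos_def using finite_Pos by (blast intro: nonneg_comb_generator)
  then obtain D where D: "D \<subseteq> Pos" "generates_Pos D"
    and least: "\<And>E. E \<subseteq> Pos \<and> generates_Pos E \<Longrightarrow> card D \<le> card E"
    using ex_has_least_nat[of "\<lambda>D. D \<subseteq> Pos \<and> generates_Pos D" Pos card] by blast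
  have "card (D - {a}) < card D" if "a \<in> D" for a
    using D(1) finite_Pos that by (meson card_Diff1_less finite_subset)
  then have "\<forall>a\<in>D. \<not> generates_Pos (D - {a})"
    using least D(1) by (meson Diff_subset dual_order.trans not_le)
  then show ?thesis using D by blast
qed

text \<open>The simple roots are taken to be a minimal set of positive roots generating all positive
  roots as a cone.\<close>
definition Simple :: "('n \<Rightarrow> int) set" where
  "Simple = (SOME D. D \<subseteq> Pos \<and> generates_Pos D \<and> (\<forall>a\<in>D. \<not> generates_Pos (D - {a})))"

lemma Simple_subset_Pos: "Simple \<subseteq> Pos"
  and generates_Pos_Simple: "generates_Pos Simple"
  and minimal_Simple: "a \<in> Simple \<Longrightarrow> \<not> generates_Pos (Simple - {a})"
  using someI_ex[OF ex_minimal_generating] unfolding Simple_def[symmetric] by auto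

lemma Simple_subset: "Simple \<subseteq> Phi"
  using Simple_subset_Pos Pos_subset by blast

lemma finite_Simple: "finite Simple"
  using Simple_subset_Pos finite_Pos finite_subset by blast

lemma Pos_nonneg_comb_Simple: "b \<in> Pos \<Longrightarrow> nonneg_comb ratvec Simple (ratvec b)"
  using generates_Pos_Simple unfolding generates_Pos_def by blast

lemma Pos_nonneg_combE:
  assumes "b \<in> Pos"
  obtains c where "\<forall>d\<in>Simple. 0 \<le> c d" and "ratvec b = (\<lambda>i. \<Sum>d\<in>Simple. c d * ratvec d i)"
  using Pos_nonneg_comb_Simple[OF assms] unfolding nonneg_comb_def by blast

lemma Simple_not_comb_others:
  assumes a: "a \<in> Simple"
  shows "\<not> nonneg_comb ratvec (Simple - {a}) (ratvec a)"
  using minimal_Simple[OF a] nonneg_comb_remove[OF finite_Simple a]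
    Pos_nonneg_comb_Simple
  unfolding generates_Pos_def by blast

lemma Simple_extremal:
  assumes a: "a \<in> Simple" and e0: "\<forall>d\<in>Simple. 0 \<le> e d"
    and ta: "(\<lambda>i. t * ratvec a i) = (\<lambda>i. \<Sum>d\<in>Simple. e d * ratvec d i)"
  shows "\<forall>d\<in>Simple - {a}. e d = 0"
proof -
  have rest: "(\<lambda>i. \<Sum>d\<in>Simple - {a}. e d * ratvec d i) = (\<lambda>i. (t - e a) * ratvec a i)"
  proof
    fix i
    have "t * ratvec a i = e a * ratvec a i + (\<Sum>d\<in>Simple - {a}. e d * ratvec d i)"
      using fun_cong[OF ta, of i] sum.remove[OF finite_Simple a, of "\<lambda>d. e d * ratvec d i"]
      by simp
    then show "(\<Sum>d\<in>Simple - {a}. e d * ratvec d i) = (t - e a) * ratvec a i"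
      by (simp add: algebra_simps)
  qed
  have pos: "0 < pair (ratvec d) v" if "d \<in> Simple" for d
    using that Simple_subset_Pos by (auto simp: mem_Pos_iff)
  have "\<not> 0 < t - e a"
  proof
    assume ta: "0 < t - e a"
    have "ratvec a = (\<lambda>i. \<Sum>d\<in>Simple - {a}. e d / (t - e a) * ratvec d i)"
      using rest ta by (simp add: fun_eq_iff sum_divide_distrib[symmetric])
    then have "nonneg_comb ratvec (Simple - {a}) (ratvec a)"
      unfolding nonneg_comb_def using e0 ta by (intro exI[of _ "\<lambda>d. e d / (t - e a)"]) auto
    then show False using Simple_not_comb_others[OF a] by simp
  qed
  then have "(\<Sum>d\<in>Simple - {a}. e d * pair (ratvec d) v) \<le> 0"
    using arg_cong[OF rest, of "\<lambda>x. pair x v"] pos[OF a]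
    by (simp add: pair_sum_left pair_scale_left mult_nonpos_nonneg)
  moreover have "\<forall>d\<in>Simple - {a}. 0 \<le> e d * pair (ratvec d) v"
    using e0 pos by (simp add: less_imp_le)
  ultimately have "\<forall>d\<in>Simple - {a}. e d * pair (ratvec d) v = 0"
    using sum_nonneg_eq_0_iff[of "Simple - {a}"] finite_Simple
    by (metis (no_types, lifting) finite_Diff order_antisym sum_nonneg)
  then show ?thesis using pos by (metis Diff_iff less_irrefl mult_eq_0_iff)
qed

lemma root_reflection_Pos:
  assumes a: "a \<in> Simple" and b: "b \<in> Pos" and ba: "b \<noteq> a"
  shows "root_reflection a b \<in> Pos"
proof (rule ccontr)
  assume "root_reflection a b \<notin> Pos"
  have aPhi: "a \<in> Phi" and bPhi: "b \<in> Phi" using a b Simple_subset Pos_subset by auto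
  define k where "k = pair (ratvec b) (coroot a)"
  define g where "g = (\<lambda>i. - root_reflection a b i)"
  have "g \<in> Pos"
    unfolding g_def using uminus_in_Pos root_reflection_root[OF aPhi bPhi] \<open>_ \<notin> Pos\<close> by blast
  obtain c where c0: "\<forall>d\<in>Simple. 0 \<le> c d" and c: "ratvec b = (\<lambda>i. \<Sum>d\<in>Simple. c d * ratvec d i)"
    using Pos_nonneg_combE[OF b] by blast
  obtain c' where c'0: "\<forall>d\<in>Simple. 0 \<le> c' d" and c': "ratvec g = (\<lambda>i. \<Sum>d\<in>Simple. c' d * ratvec d i)"
    using Pos_nonneg_combE[OF \<open>g \<in> Pos\<close>] by blast
  have "ratvec g = (\<lambda>i. k * ratvec a i - ratvec b i)"
    unfolding g_def ratvec_minus ratvec_root_reflection dual_reflection_def k_def by auto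
  then have "(\<lambda>i. k * ratvec a i) = (\<lambda>i. \<Sum>d\<in>Simple. (c d + c' d) * ratvec d i)"
    using c c' by (auto simp: fun_eq_iff sum.distrib algebra_simps dest!: fun_cong)
  then have "\<forall>d\<in>Simple - {a}. c d + c' d = 0"
    using Simple_extremal[OF a] c0 c'0 by (meson add_nonneg_nonneg)
  then have "\<forall>d\<in>Simple - {a}. c d = 0" using c0 c'0 by (meson DiffD1 add_nonneg_eq_0_iff)
  then have cb: "ratvec b = (\<lambda>i. c a * ratvec a i)"
    using c sum.remove[OF finite_Simple a, of "\<lambda>d. c d * ratvec d _"] by (auto simp: fun_eq_iff)
  have "0 < c a * pair (ratvec a) v"
    using b cb by (simp add: mem_Pos_iff flip: pair_scale_left)
  then have "0 < c a"
    using a Simple_subset_Pos by (auto simp: mem_Pos_iff zero_less_mult_iff)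
  then show False using positive_multiple_root_eq[OF aPhi bPhi _ cb] ba by simp
qed

lemma root_reflection_ne_Simple:
  assumes a: "a \<in> Simple" and b: "b \<in> Pos" and ba: "b \<noteq> a"
  shows "root_reflection a b \<noteq> a"
proof
  assume "root_reflection a b = a"
  have aPhi: "a \<in> Phi" using a Simple_subset by auto
  then have "b = (\<lambda>i. - a i)"
    using root_reflection_involutive[OF aPhi, of b] root_reflection_self[OF aPhi]
      \<open>root_reflection a b = a\<close> by simp
  then show False using uminus_notin_Pos[of a] a Simple_subset_Pos b by auto
qed

definition inversions :: "('n \<Rightarrow> rat) \<Rightarrow> ('n \<Rightarrow> int) set" where
  "inversions z = {b\<in>Pos. pair (ratvec b) z < 0}"

lemma finite_inversions: "finite (inversions z)"
  unfolding inversions_def using finite_Pos by auto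

lemma inversions_reflection_Diff:
  assumes a: "a \<in> Simple"
  shows "inversions (reflection a z) - {a} = root_reflection a ` (inversions z - {a})"
proof -
  have aPhi: "a \<in> Phi" using a Simple_subset by auto
  have moved: "root_reflection a b \<in> Pos - {a}" if "b \<in> Pos - {a}" for b
    using that root_reflection_Pos[OF a] root_reflection_ne_Simple[OF a] by blast
  have swap: "root_reflection a b \<in> inversions y - {a}"
    if "b \<in> inversions (reflection a y) - {a}" for b y
    using that moved[of b] by (simp add: inversions_def pair_root_reflection)
  show ?thesis
  proof (intro equalityI subsetI)
    fix b assume "b \<in> inversions (reflection a z) - {a}"
    then have "root_reflection a b \<in> inversions z - {a}" by (rule swap)
    then show "b \<in> root_reflection a ` (inversions z - {a})"
      using root_reflection_involutive[OF aPhi, of b] by (metis image_eqI)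
  next
    fix b assume "b \<in> root_reflection a ` (inversions z - {a})"
    then obtain c where c: "c \<in> inversions z - {a}" and b: "b = root_reflection a c" by blast
    have "c \<in> inversions (reflection a (reflection a z)) - {a}"
      using c by (simp add: reflection_involutive[OF aPhi])
    then show "b \<in> inversions (reflection a z) - {a}" unfolding b by (rule swap)
  qed
qed

lemma card_inversions_reflection_Diff:
  assumes a: "a \<in> Simple"
  shows "card (inversions (reflection a z) - {a}) = card (inversions z - {a})"
proof -
  have aPhi: "a \<in> Phi" using a Simple_subset by auto
  have "inj_on (root_reflection a) (inversions z - {a})"
    by (rule inj_on_inverseI[of _ "root_reflection a"])
       (simp add: root_reflection_involutive[OF aPhi])
  then show ?thesis using inversions_reflection_Diff[OF a] by (simp add: card_image)
qed

lemma Simple_in_inversions_reflection: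
  assumes a: "a \<in> Simple"
  shows "a \<in> inversions (reflection a z) \<longleftrightarrow> 0 < pair (ratvec a) z"
  using a Simple_subset Simple_subset_Pos
  by (auto simp: inversions_def pair_root_reflection root_reflection_self ratvec_minus
      pair_minus_left)

lemma card_inversions_reflection_neg:
  assumes a: "a \<in> Simple" and neg: "pair (ratvec a) z < 0"
  shows "card (inversions (reflection a z)) + 1 = card (inversions z)"
proof -
  have "a \<in> inversions z" using a Simple_subset_Pos neg unfolding inversions_def by auto
  then have "card (inversions z) = card (inversions z - {a}) + 1"
    using card_Suc_Diff1[OF finite_inversions] by simp
  moreover have "a \<notin> inversions (reflection a z)"
    using Simple_in_inversions_reflection[OF a] neg by auto
  ultimately show ?thesis using card_inversions_reflection_Diff[OF a, of z] by simp
qed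

lemma card_inversions_reflection_pos:
  assumes a: "a \<in> Simple" and pos: "0 < pair (ratvec a) z"
  shows "card (inversions (reflection a z)) = card (inversions z) + 1"
proof -
  have "a \<in> inversions (reflection a z)"
    using Simple_in_inversions_reflection[OF a] pos by auto
  then have "card (inversions (reflection a z)) = card (inversions (reflection a z) - {a}) + 1"
    using card_Suc_Diff1[OF finite_inversions] by simp
  moreover have "a \<notin> inversions z" using pos unfolding inversions_def by auto
  ultimately show ?thesis using card_inversions_reflection_Diff[OF a, of z] by simp
qed

section \<open>The Weyl group\<close>

abbreviation W :: "(('n \<Rightarrow> rat) \<Rightarrow> 'n \<Rightarrow> rat) set" where
  "W \<equiv> weyl_group Phi cor"

lemma reflection_in_W: "a \<in> Phi \<Longrightarrow> reflection a \<in> W"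
  using weyl_group.refl[OF weyl_group.id] by simp

lemma W_comp: "w \<in> W \<Longrightarrow> w' \<in> W \<Longrightarrow> w \<circ> w' \<in> W"
proof (induction w rule: weyl_group.induct)
  case id
  then show ?case by simp
next
  case (refl w a)
  have "w \<circ> w' \<in> W" using refl.IH[OF refl.prems] .
  from weyl_group.refl[OF this refl(2)] show ?case by (metis comp_assoc)
qed

lemma W_inverse: "w \<in> W \<Longrightarrow> \<exists>w'\<in>W. (\<forall>x. w' (w x) = x) \<and> (\<forall>y. w (w' y) = y)"
proof (induction w rule: weyl_group.induct)
  case id
  then show ?case by (intro bexI[of _ id]) (auto intro: weyl_group.id)
next
  case (refl w a)
  then obtain w' where "w' \<in> W" "\<forall>x. w' (w x) = x" "\<forall>y. w (w' y) = y" by blast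
  then show ?case
    using W_comp[OF \<open>w' \<in> W\<close> reflection_in_W[OF refl(2)]] reflection_involutive[OF refl(2)]
    by (intro bexI[of _ "w' \<circ> reflection a"]) auto
qed

lemma W_invE:
  assumes "w \<in> W"
  obtains w' where "w' \<in> W" and "\<And>x. w' (w x) = x" and "\<And>y. w (w' y) = y"
  using W_inverse[OF assms] by blast

lemma inj_W: "w \<in> W \<Longrightarrow> inj w"
  by (metis W_invE injI)

lemma W_dual_root: "w \<in> W \<Longrightarrow> b \<in> Phi \<Longrightarrow> \<exists>b'\<in>Phi. \<forall>x. pair (ratvec b) (w x) = pair (ratvec b') x"
proof (induction w arbitrary: b rule: weyl_group.induct)
  case id
  then show ?case by auto
next
  case (refl w a)
  then obtain b' where
    "b' \<in> Phi" "\<forall>x. pair (ratvec (root_reflection a b)) (w x) = pair (ratvec b') x"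
    using root_reflection_root by blast
  then show ?case by (auto simp: pair_root_reflection)
qed

lemma W_transpose: "w \<in> W \<Longrightarrow> \<exists>u'. \<forall>x. pair u (w x) = pair u' x"
proof (induction w arbitrary: u rule: weyl_group.induct)
  case id
  then show ?case by auto
next
  case (refl w a)
  then obtain u' where "\<forall>x. pair (dual_reflection a u) (w x) = pair u' x" by blast
  then show ?case by (auto simp: pair_reflection)
qed

lemma linear_map_W: "w \<in> W \<Longrightarrow> linear_map w"
proof (induction w rule: weyl_group.induct)
  case id
  then show ?case by (simp add: linear_map_def)
next
  case (refl w a)
  then show ?case using linear_map_reflection[of a] by (simp add: linear_map_def)
qed

lemma pair_root_W_v_nonzero: "w \<in> W \<Longrightarrow> b \<in> Phi \<Longrightarrow> pair (ratvec b) (w v) \<noteq> 0"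
  using W_dual_root pair_root_v_nonzero by metis

fun word_map :: "('n \<Rightarrow> int) list \<Rightarrow> ('n \<Rightarrow> rat) \<Rightarrow> 'n \<Rightarrow> rat" where
  "word_map [] = id"
| "word_map (a # as) = reflection a \<circ> word_map as"

fun word_root :: "('n \<Rightarrow> int) list \<Rightarrow> ('n \<Rightarrow> int) \<Rightarrow> 'n \<Rightarrow> int" where
  "word_root [] b = b"
| "word_root (a # as) b = word_root as (root_reflection a b)"

lemma word_map_in_W: "set as \<subseteq> Phi \<Longrightarrow> word_map as \<in> W"
  by (induction as) (auto intro: weyl_group.intros)

lemma word_map_append: "word_map (as @ bs) = word_map as \<circ> word_map bs"
  by (induction as) auto

lemma pair_root_word_map: "pair (ratvec b) (word_map as x) = pair (ratvec (word_root as b)) x"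
  by (induction as arbitrary: b) (auto simp: pair_root_reflection)

lemma word_root_root: "set as \<subseteq> Phi \<Longrightarrow> b \<in> Phi \<Longrightarrow> word_root as b \<in> Phi"
  by (induction as arbitrary: b) (auto simp: root_reflection_root)

lemma reflection_comp_swap:
  assumes a: "a \<in> Phi" and b: "b \<in> Phi"
  shows "reflection b \<circ> reflection a = reflection a \<circ> reflection (root_reflection a b)"
proof
  fix y
  have "reflection a (reflection (root_reflection a b) y) =
      reflection a (reflection a (reflection b (reflection a y)))"
    using reflection_conj[OF b a] by simp
  then show "(reflection b \<circ> reflection a) y = (reflection a \<circ> reflection (root_reflection a b)) y"
    using reflection_involutive[OF a] by simp
qed

lemma exchange_condition:
  "set as \<subseteq> Simple \<Longrightarrow> b \<in> Pos \<Longrightarrow> word_root as b \<notin> Pos \<Longrightarrow>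
    \<exists>i<length as. reflection b \<circ> word_map as = word_map (take i as @ drop (Suc i) as)"
proof (induction as arbitrary: b)
  case Nil
  then show ?case by simp
next
  case (Cons a as)
  have a: "a \<in> Simple" and as: "set as \<subseteq> Simple" using Cons.prems(1) by auto
  have aPhi: "a \<in> Phi" and bPhi: "b \<in> Phi" using a Cons.prems(2) Simple_subset Pos_subset by auto
  show ?case
  proof (cases "b = a")
    case True
    have "reflection a \<circ> word_map (a # as) = word_map as"
      using reflection_involutive[OF aPhi] by (simp add: fun_eq_iff)
    with True show ?thesis
      by (metis append.simps(1) drop_Suc_Cons drop_0 take_0 length_Cons zero_less_Suc)
  next
    case False
    obtain i where i: "i < length as"
      and ex: "reflection (root_reflection a b) \<circ> word_map as =
        word_map (take i as @ drop (Suc i) as)"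
      using Cons.IH[OF as root_reflection_Pos[OF a Cons.prems(2) False]] Cons.prems(3)
      by (simp only: word_root.simps) blast
    have "reflection b \<circ> word_map (a # as) =
        reflection a \<circ> (reflection (root_reflection a b) \<circ> word_map as)"
      using reflection_comp_swap[OF aPhi bPhi] by (metis comp_assoc word_map.simps(2))
    also have "\<dots> = word_map (take (Suc i) (a # as) @ drop (Suc (Suc i)) (a # as))"
      by (simp add: ex)
    finally show ?thesis using i by (metis Suc_mono length_Cons)
  qed
qed

lemma Pos_descent:
  assumes b: "b \<in> Pos" "b \<notin> Simple"
  obtains g where "g \<in> Simple" and "root_reflection g b \<in> Pos"
    and "pair (ratvec (root_reflection g b)) v < pair (ratvec b) v"
proof -
  have bPhi: "b \<in> Phi" using b Pos_subset by auto
  obtain c where c0: "\<forall>d\<in>Simple. 0 \<le> c d" and c: "ratvec b = (\<lambda>i. \<Sum>d\<in>Simple. c d * ratvec d i)"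
    using Pos_nonneg_combE[OF b(1)] by blast
  have "0 < char_form (ratvec b) (ratvec b)" using char_form_root_root[OF bPhi] by simp
  also have "\<dots> = (\<Sum>d\<in>Simple. c d * char_form (ratvec b) (ratvec d))"
    by (subst (2) c) (rule char_form_sum_right)
  finally obtain g where g: "g \<in> Simple" "0 < c g * char_form (ratvec b) (ratvec g)"
    by (metis (no_types, lifting) linorder_not_le sum_nonpos)
  have gPhi: "g \<in> Phi" using g Simple_subset by auto
  have "0 < char_form (ratvec g) (ratvec b)"
    using g c0 char_form_commute by (metis linorder_not_le mult_nonneg_nonpos)
  then have k: "0 < pair (ratvec b) (coroot g)"
    using pair_coroot_char_form[OF gPhi, of "ratvec b"] char_form_root_root[OF gPhi] by simp
  have "pair (ratvec (root_reflection g b)) v =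
      pair (ratvec b) v - pair (ratvec b) (coroot g) * pair (ratvec g) v"
    unfolding ratvec_root_reflection dual_reflection_def pair_diff_left pair_scale_left ..
  moreover have "0 < pair (ratvec b) (coroot g) * pair (ratvec g) v"
    using k g Simple_subset_Pos by (auto simp: mem_Pos_iff)
  moreover have "b \<noteq> g" using b(2) g(1) by blast
  ultimately show ?thesis
    using that[OF g(1) root_reflection_Pos[OF g(1) b(1)]] by linarith
qed

lemma reflection_Pos_word: "b \<in> Pos \<Longrightarrow> \<exists>bs. set bs \<subseteq> Simple \<and> reflection b = word_map bs"
proof (induction "card {d\<in>Pos. pair (ratvec d) v < pair (ratvec b) v}" arbitrary: b
    rule: less_induct)
  case less
  show ?case
  proof (cases "b \<in> Simple")
    case True
    then show ?thesis by (intro exI[of _ "[b]"]) auto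
  next
    case False
    obtain g where g: "g \<in> Simple" and b': "root_reflection g b \<in> Pos"
      and lt: "pair (ratvec (root_reflection g b)) v < pair (ratvec b) v"
      using Pos_descent[OF less.prems False] by blast
    have gPhi: "g \<in> Phi" and bPhi: "b \<in> Phi" using g less.prems Simple_subset Pos_subset by auto
    have "card {d\<in>Pos. pair (ratvec d) v < pair (ratvec (root_reflection g b)) v}
        < card {d\<in>Pos. pair (ratvec d) v < pair (ratvec b) v}"
      using lt b' by (intro psubset_card_mono) (auto simp: finite_Pos)
    then obtain bs where bs: "set bs \<subseteq> Simple" "reflection (root_reflection g b) = word_map bs"
      using less.hyps b' by blast
    have "reflection b x = reflection g (reflection (root_reflection g b) (reflection g x))" for x
      by (simp only: reflection_conj[OF bPhi gPhi, symmetric] reflection_involutive[OF gPhi])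
    then have "reflection b = word_map ([g] @ bs @ [g])"
      by (simp add: word_map_append bs(2)[symmetric] fun_eq_iff)
    then show ?thesis using bs(1) g by (intro exI[of _ "[g] @ bs @ [g]"]) auto
  qed
qed

lemma reflection_word: "b \<in> Phi \<Longrightarrow> \<exists>bs. set bs \<subseteq> Simple \<and> reflection b = word_map bs"
  using reflection_Pos_word uminus_in_Pos reflection_uminus by metis

text \<open>Reducedness is expressed by counting the inversions of the regular element \<open>v\<close> rather
  than by minimality of the length.\<close>
lemma inversions_v: "inversions v = {}"
  by (auto simp: inversions_def mem_Pos_iff)

definition reduced_word :: "('n \<Rightarrow> int) list \<Rightarrow> bool" where
  "reduced_word as \<longleftrightarrow> set as \<subseteq> Simple \<and> length as = card (inversions (word_map as v))"

lemma reflection_v_cases: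
  assumes "a \<in> Simple" and "set as \<subseteq> Simple"
  obtains "0 < pair (ratvec a) (word_map as v)" | "pair (ratvec a) (word_map as v) < 0"
  using pair_root_W_v_nonzero[OF word_map_in_W] assms Simple_subset
  by (metis linorder_neqE subset_trans subsetD)

lemma card_inversions_word_le: "set as \<subseteq> Simple \<Longrightarrow> card (inversions (word_map as v)) \<le> length as"
proof (induction as)
  case Nil
  then show ?case by (simp add: inversions_v)
next
  case (Cons a as)
  then have a: "a \<in> Simple" and as: "set as \<subseteq> Simple" by auto
  from reflection_v_cases[OF a as] show ?case
    using card_inversions_reflection_pos[OF a] card_inversions_reflection_neg[OF a] Cons.IH[OF as]
    by cases fastforce+
qed

lemma reduced_word_Cons:
  assumes "reduced_word (a # as)"
  shows "reduced_word as" and "0 < pair (ratvec a) (word_map as v)"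
proof -
  have a: "a \<in> Simple" and as: "set as \<subseteq> Simple"
    and len: "card (inversions (reflection a (word_map as v))) = Suc (length as)"
    using assms unfolding reduced_word_def by auto
  have le: "card (inversions (word_map as v)) \<le> length as" using card_inversions_word_le[OF as] .
  from reflection_v_cases[OF a as] show pos: "0 < pair (ratvec a) (word_map as v)"
  proof cases
    case 2
    then show ?thesis using card_inversions_reflection_neg[OF a 2] len le by simp
  qed
  show "reduced_word as"
    using card_inversions_reflection_pos[OF a pos] len as unfolding reduced_word_def by simp
qed

lemma reflection_comp_reduced_word:
  assumes a: "a \<in> Simple" and as: "reduced_word as"
  shows "\<exists>bs. reduced_word bs \<and> reflection a \<circ> word_map as = word_map bs"
proof -
  have as_Simple: "set as \<subseteq> Simple" and len: "length as = card (inversions (word_map as v))"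
    using as unfolding reduced_word_def by auto
  from reflection_v_cases[OF a as_Simple] show ?thesis
  proof cases
    case 1
    then have "reduced_word (a # as)"
      using card_inversions_reflection_pos[OF a] a as_Simple len by (simp add: reduced_word_def)
    then show ?thesis by fastforce
  next
    case 2
    then have "word_root as a \<notin> Pos"
      using pair_root_word_map[of a as v] by (auto simp: mem_Pos_iff)
    then obtain i where i: "i < length as"
      and ex: "reflection a \<circ> word_map as = word_map (take i as @ drop (Suc i) as)"
      using exchange_condition[OF as_Simple] a Simple_subset_Pos by blast
    have "set (take i as @ drop (Suc i) as) \<subseteq> Simple"
      using as_Simple set_take_subset[of i as] set_drop_subset[of "Suc i" as] by auto
    moreover have
      "length (take i as @ drop (Suc i) as) = card (inversions (reflection a (word_map as v)))"
      using card_inversions_reflection_neg[OF a 2] len i by simp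
    moreover have "word_map (take i as @ drop (Suc i) as) v = reflection a (word_map as v)"
      using fun_cong[OF ex, of v] by simp
    ultimately have "reduced_word (take i as @ drop (Suc i) as)"
      unfolding reduced_word_def by simp
    then show ?thesis using ex by blast
  qed
qed

lemma word_comp_reduced_word:
  assumes "set bs \<subseteq> Simple" and "reduced_word as"
  shows "\<exists>cs. reduced_word cs \<and> word_map bs \<circ> word_map as = word_map cs"
  using assms(1)
proof (induction bs)
  case Nil
  then show ?case using assms(2) by auto
next
  case (Cons b bs)
  then have "set bs \<subseteq> Simple" by simp
  then obtain cs where cs: "reduced_word cs" "word_map bs \<circ> word_map as = word_map cs"
    using Cons.IH by blast
  have "word_map (b # bs) \<circ> word_map as = reflection b \<circ> word_map cs"
    by (simp add: cs(2)[symmetric] comp_assoc)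
  moreover obtain ds where "reduced_word ds" "reflection b \<circ> word_map cs = word_map ds"
    using reflection_comp_reduced_word[of b cs] Cons.prems cs(1) by auto
  ultimately show ?case by metis
qed

lemma W_reduced_word: "w \<in> W \<Longrightarrow> \<exists>as. reduced_word as \<and> w = word_map as"
proof (induction w rule: weyl_group.induct)
  case id
  have "reduced_word []" by (simp add: reduced_word_def inversions_v)
  then show ?case by (intro exI[of _ "[]"]) simp
next
  case (refl w a)
  then obtain as bs where "reduced_word as" "w = word_map as"
    and "set bs \<subseteq> Simple" "reflection a = word_map bs"
    using reflection_word by blast
  then show ?case using word_comp_reduced_word by metis
qed

lemma finite_W: "finite W"
proof -
  have "W \<subseteq> word_map ` {as. set as \<subseteq> Simple \<and> length as \<le> card Pos}"
  proof
    fix w assume "w \<in> W"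
    then obtain as where as: "reduced_word as" "w = word_map as"
      using W_reduced_word by blast
    have "card (inversions (w v)) \<le> card Pos"
      unfolding inversions_def by (rule card_mono[OF finite_Pos]) auto
    then show "w \<in> word_map ` {as. set as \<subseteq> Simple \<and> length as \<le> card Pos}"
      using as unfolding reduced_word_def by auto
  qed
  moreover have "finite {as. set as \<subseteq> Simple \<and> length as \<le> card Pos}"
    by (rule finite_lists_length_le[OF finite_Simple])
  ultimately show ?thesis using finite_subset by blast
qed

section \<open>The dominant chamber\<close>

abbreviation Chamber :: "('n \<Rightarrow> rat) set" where
  "Chamber \<equiv> pos_chamber Phi v"

lemma mem_Chamber_iff: "x \<in> Chamber \<longleftrightarrow> (\<forall>a\<in>Pos. 0 \<le> pair (ratvec a) x)"
  unfolding pos_chamber_def ratvec_def by simp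

lemma dominant_minus_word_map:
  assumes "reduced_word as" and x: "x \<in> Chamber"
  shows "nonneg_comb coroot Pos (\<lambda>i. x i - word_map as x i)"
  using assms(1)
proof (induction as)
  case Nil
  have "(\<lambda>i. x i - word_map [] x i) = (\<lambda>i. \<Sum>b\<in>Pos. 0 * coroot b i)" by simp
  then show ?case unfolding nonneg_comb_def by (intro exI[of _ "\<lambda>b. 0"]) simp
next
  case (Cons a as)
  have a: "a \<in> Pos" and as_Phi: "set as \<subseteq> Phi" and aPhi: "a \<in> Phi"
    using Cons.prems Simple_subset_Pos Simple_subset unfolding reduced_word_def by auto
  define t where "t = pair (ratvec a) (word_map as x)"
  have "0 < pair (ratvec (word_root as a)) v"
    using reduced_word_Cons(2)[OF Cons.prems] by (simp add: pair_root_word_map)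
  then have "word_root as a \<in> Pos" using word_root_root[OF as_Phi aPhi] by (simp add: mem_Pos_iff)
  then have "0 \<le> t" using x by (simp add: t_def pair_root_word_map mem_Chamber_iff)
  moreover have "(\<lambda>i. x i - word_map (a # as) x i) = (\<lambda>i. (x i - word_map as x i) + t * coroot a i)"
    by (simp add: reflection_eq t_def algebra_simps)
  ultimately show ?case
    using nonneg_comb_add_generator[OF finite_Pos a Cons.IH[OF reduced_word_Cons(1)[OF Cons.prems]]]
    by simp
qed

lemma dominant_minus_W: "w \<in> W \<Longrightarrow> x \<in> Chamber \<Longrightarrow> nonneg_comb coroot Pos (\<lambda>i. x i - w x i)"
  using W_reduced_word dominant_minus_word_map by blast

lemma W_pair_le_dominant:
  assumes "w \<in> W" and "x \<in> Chamber" and "\<forall>b\<in>Pos. 0 \<le> pair u (coroot b)"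
  shows "pair u (w x) \<le> pair u x"
  using pair_nonneg_comb_nonneg[OF dominant_minus_W[OF assms(1,2)] assms(3)]
  by (simp add: pair_diff_right)

lemma W_pair_less_dominant:
  assumes "w \<in> W" and "x \<in> Chamber" and "\<forall>b\<in>Pos. 0 < pair u (coroot b)" and "w x \<noteq> x"
  shows "pair u (w x) < pair u x"
proof -
  have "(\<lambda>i. x i - w x i) \<noteq> (\<lambda>i. 0)"
  proof
    assume zero: "(\<lambda>i. x i - w x i) = (\<lambda>i. 0)"
    have "w x = x"
    proof
      fix i
      show "w x i = x i" using fun_cong[OF zero, of i] by simp
    qed
    with assms(4) show False by simp
  qed
  then show ?thesis
    using pair_nonneg_comb_pos[OF finite_Pos dominant_minus_W[OF assms(1,2)] assms(3)]
    by (simp add: pair_diff_right)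
qed

text \<open>\<open>\<rho>\<close> plays the role of the half sum of positive roots: it is the image of \<open>v\<close> under the
  invariant form, which makes its positivity on positive coroots immediate.\<close>
definition rho :: "'n \<Rightarrow> rat" where
  "rho = (\<lambda>i. \<Sum>b\<in>Phi. pair (ratvec b) v * ratvec b i)"

lemma pair_rho: "pair rho x = cochar_form v x"
  unfolding rho_def cochar_form_def by (simp add: pair_sum_left pair_scale_left)

lemma pair_rho_coroot_pos: "\<forall>b\<in>Pos. 0 < pair rho (coroot b)"
proof
  fix b assume b: "b \<in> Pos"
  then have bPhi: "b \<in> Phi" using Pos_subset by auto
  have "2 * pair rho (coroot b) = pair (ratvec b) v * cochar_form (coroot b) (coroot b)"
    using cochar_form_coroot[OF bPhi, of v] by (simp add: pair_rho cochar_form_commute)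
  moreover have "0 < pair (ratvec b) v * cochar_form (coroot b) (coroot b)"
    using b cochar_form_coroot_coroot[OF bPhi] by (simp add: mem_Pos_iff)
  ultimately show "0 < pair rho (coroot b)" by simp
qed

lemma W_dominant_unique:
  assumes w: "w \<in> W" and x: "x \<in> Chamber" and wx: "w x \<in> Chamber"
  shows "w x = x"
proof (rule ccontr)
  assume ne: "w x \<noteq> x"
  obtain w' where w': "w' \<in> W" "w' (w x) = x" using W_invE[OF w] by blast
  have "pair rho x < pair rho (w x)"
    using W_pair_less_dominant[OF w'(1) wx pair_rho_coroot_pos] w'(2) ne by simp
  moreover have "pair rho (w x) < pair rho x"
    using W_pair_less_dominant[OF w x pair_rho_coroot_pos ne] .
  ultimately show False by simp
qed

text \<open>An element of the orbit maximising \<open>\<rho>\<close> is dominant, since reflecting in a root that is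
  negative on it would increase \<open>\<rho>\<close>.\<close>
lemma W_dominant_exists: "\<exists>w\<in>W. w y \<in> Chamber"
proof -
  let ?val = "\<lambda>w. pair rho (w y)"
  have fin: "finite (?val ` W)" using finite_W by (rule finite_imageI)
  have "?val ` W \<noteq> {}" using weyl_group.id by blast
  then have "Max (?val ` W) \<in> ?val ` W" using fin by (rule Max_in[rotated])
  then obtain w where w: "w \<in> W" "?val w = Max (?val ` W)" by (rule imageE) simp
  have "w y \<in> Chamber" unfolding mem_Chamber_iff
  proof (rule ballI, rule ccontr)
    fix a assume a: "a \<in> Pos" and "\<not> 0 \<le> pair (ratvec a) (w y)"
    then have "0 < - pair (ratvec a) (w y) * pair rho (coroot a)"
      using pair_rho_coroot_pos by (simp add: mult_neg_pos)
    then have "?val w < ?val (reflection a \<circ> w)"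
      by (simp add: reflection_eq pair_diff_right pair_scale_right)
    moreover have "reflection a \<circ> w \<in> W"
      using weyl_group.refl[OF w(1)] a Pos_subset by blast
    then have "?val (reflection a \<circ> w) \<le> Max (?val ` W)"
      using fin by (intro Max_ge) blast+
    ultimately show False using w(2) by linarith
  qed
  then show ?thesis using w(1) by blast
qed

section \<open>The Weyl fan\<close>

lemma polyhedral_cone_W_image: "w \<in> W \<Longrightarrow> polyhedral_cone C \<Longrightarrow> polyhedral_cone (w ` C)"
  unfolding polyhedral_cone_def using cone_gen_image[OF linear_map_W inj_W] by blast

lemma face_of_cone_W_image: "w \<in> W \<Longrightarrow> face_of_cone G C \<Longrightarrow> face_of_cone (w ` G) (w ` C)"
  by (erule W_invE) (rule face_of_cone_image[OF W_transpose])

lemma dominant_Int_W_image: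
  assumes C: "C \<subseteq> Chamber" and D: "D \<subseteq> Chamber" and w: "w \<in> W"
  shows "C \<inter> w ` D = {x\<in>C \<inter> D. w x = x}"
proof (intro equalityI subsetI)
  fix x assume "x \<in> C \<inter> w ` D"
  then obtain z where "x \<in> C" "z \<in> D" "x = w z" by blast
  moreover have "w z = z" using W_dominant_unique[OF w] C D \<open>x \<in> C\<close> \<open>z \<in> D\<close> \<open>x = w z\<close> by blast
  ultimately show "x \<in> {x\<in>C \<inter> D. w x = x}" by simp
next
  fix x assume "x \<in> {x\<in>C \<inter> D. w x = x}"
  then show "x \<in> C \<inter> w ` D" by (auto intro: rev_image_eqI)
qed

text \<open>On the dominant chamber the fixed points of \<open>w\<close> are cut out by the functional
  \<open>\<rho> - w\<^sup>T\<rho>\<close>, which is nonnegative there.\<close>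
lemma face_of_cone_Int_W_image:
  assumes CD: "face_of_cone (C \<inter> D) C" and C: "C \<subseteq> Chamber" and D: "D \<subseteq> Chamber" and w: "w \<in> W"
  shows "face_of_cone (C \<inter> w ` D) C"
proof -
  obtain u where u: "\<forall>x. pair rho (w x) = pair u x" using W_transpose[OF w] by blast
  let ?d = "\<lambda>i. rho i - u i"
  have d: "pair ?d x = pair rho x - pair rho (w x)" for x by (simp add: pair_diff_left u)
  have "\<forall>x\<in>C. 0 \<le> pair ?d x"
    using W_pair_le_dominant[OF w] C pair_rho_coroot_pos by (auto simp: d less_imp_le)
  moreover have "w x = x \<longleftrightarrow> pair ?d x = 0" if "x \<in> C" for x
  proof -
    have "x \<in> Chamber" using C that by blast
    then show ?thesis using W_pair_less_dominant[OF w _ pair_rho_coroot_pos, of x]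
      by (cases "w x = x") (auto simp: d)
  qed
  then have "C \<inter> w ` D = {x\<in>C \<inter> D. pair ?d x = 0}"
    using dominant_Int_W_image[OF C D w] by auto
  ultimately show ?thesis using face_of_cone_restrict[OF CD] by simp
qed

context
  fixes Sig :: "('n \<Rightarrow> rat) set set"
  assumes fan_Sig: "fan Sig" and support_Sig: "support Sig = Chamber"
begin

lemma cone_subset_Chamber: "C \<in> Sig \<Longrightarrow> C \<subseteq> Chamber"
  using support_Sig unfolding support_def by blast

lemma Chamber_covered: "z \<in> Chamber \<Longrightarrow> \<exists>C\<in>Sig. z \<in> C"
  using support_Sig unfolding support_def by blast

lemma weyl_fan_eq: "weyl_fan Phi cor Sig = (\<lambda>(w, C). w ` C) ` (W \<times> Sig)"
  unfolding weyl_fan_def by auto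

lemma weyl_fanE:
  assumes "E \<in> weyl_fan Phi cor Sig"
  obtains w C where "w \<in> W" and "C \<in> Sig" and "E = w ` C"
  using assms unfolding weyl_fan_def by blast

lemma weyl_fanI: "w \<in> W \<Longrightarrow> C \<in> Sig \<Longrightarrow> w ` C \<in> weyl_fan Phi cor Sig"
  unfolding weyl_fan_def by blast

lemma face_of_cone_weyl_fan_Int:
  assumes E1: "E1 \<in> weyl_fan Phi cor Sig" and E2: "E2 \<in> weyl_fan Phi cor Sig"
  shows "face_of_cone (E1 \<inter> E2) E1"
proof -
  obtain w1 C where w1: "w1 \<in> W" and C: "C \<in> Sig" and E1_eq: "E1 = w1 ` C"
    using E1 by (rule weyl_fanE)
  obtain w2 D where w2: "w2 \<in> W" and D: "D \<in> Sig" and E2_eq: "E2 = w2 ` D"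
    using E2 by (rule weyl_fanE)
  obtain w1' where w1': "w1' \<in> W" "\<And>x. w1' (w1 x) = x" "\<And>y. w1 (w1' y) = y"
    using W_invE[OF w1] by blast
  have "w1 ` ((w1' \<circ> w2) ` D) = E2" using w1'(3) by (simp add: E2_eq image_image)
  then have eq: "w1 ` C \<inter> E2 = w1 ` (C \<inter> (w1' \<circ> w2) ` D)"
    using image_Int[OF inj_W[OF w1]] by simp
  have "face_of_cone (C \<inter> D) C" using fan_Sig C D unfolding fan_def by blast
  then have "face_of_cone (C \<inter> (w1' \<circ> w2) ` D) C"
    using face_of_cone_Int_W_image cone_subset_Chamber C D W_comp[OF w1'(1) w2] by blast
  then show ?thesis unfolding E1_eq eq by (rule face_of_cone_W_image[OF w1])
qed

lemma fan_weyl_fan: "fan (weyl_fan Phi cor Sig)"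
  unfolding fan_def
proof (intro conjI ballI allI impI)
  show "finite (weyl_fan Phi cor Sig)"
    using finite_W fan_Sig unfolding weyl_fan_eq fan_def by simp
next
  fix E assume "E \<in> weyl_fan Phi cor Sig"
  then obtain w C where "w \<in> W" "C \<in> Sig" "E = w ` C" by (rule weyl_fanE)
  then show "polyhedral_cone E"
    using fan_Sig polyhedral_cone_W_image unfolding fan_def by blast
next
  fix E F assume E: "E \<in> weyl_fan Phi cor Sig" and F: "face_of_cone F E"
  obtain w C where w: "w \<in> W" and C: "C \<in> Sig" and "E = w ` C"
    using E by (rule weyl_fanE)
  then obtain G where "face_of_cone G C" "F = w ` G"
    using face_of_cone_preimage[OF W_transpose[OF w]] F by blast
  then show "F \<in> weyl_fan Phi cor Sig"
    using fan_Sig C weyl_fanI[OF w] unfolding fan_def by blast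
next
  fix E1 E2 assume "E1 \<in> weyl_fan Phi cor Sig" "E2 \<in> weyl_fan Phi cor Sig"
  then show "face_of_cone (E1 \<inter> E2) E1" "face_of_cone (E1 \<inter> E2) E2"
    using face_of_cone_weyl_fan_Int Int_commute[of E1 E2] by metis+
qed

lemma support_weyl_fan: "support (weyl_fan Phi cor Sig) = UNIV"
proof -
  have "y \<in> support (weyl_fan Phi cor Sig)" for y
  proof -
    obtain w where w: "w \<in> W" "w y \<in> Chamber" using W_dominant_exists by blast
    obtain C where C: "C \<in> Sig" "w y \<in> C" using Chamber_covered[OF w(2)] by blast
    obtain w' where w': "w' \<in> W" "w' (w y) = y" using W_invE[OF w(1)] by blast
    have "y \<in> w' ` C" using C(2) w'(2) by (metis image_eqI)
    then show ?thesis using weyl_fanI[OF w'(1) C(1)] unfolding support_def by blast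
  qed
  then show ?thesis by blast
qed

end

section \<open>Extending a strictly convex function to the Weyl fan\<close>

context
  fixes Sig :: "('n \<Rightarrow> rat) set set" and f :: "('n \<Rightarrow> rat) \<Rightarrow> rat"
  assumes fan_Sig: "fan Sig" and support_Sig: "support Sig = Chamber"
    and convex_f: "strictly_convex_pl Sig f"
begin

definition support_form :: "('n \<Rightarrow> rat) set \<Rightarrow> 'n \<Rightarrow> rat" where
  "support_form C = (SOME u. \<forall>x\<in>Chamber. pair u x \<le> f x \<and> (pair u x = f x \<longleftrightarrow> x \<in> C))"

lemma support_form:
  assumes "C \<in> Sig" and "x \<in> Chamber"
  shows "pair (support_form C) x \<le> f x" and "pair (support_form C) x = f x \<longleftrightarrow> x \<in> C"
proof -
  have "\<exists>u. \<forall>x\<in>Chamber. pair u x \<le> f x \<and> (pair u x = f x \<longleftrightarrow> x \<in> C)"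
    using convex_f assms(1) support_Sig unfolding strictly_convex_pl_def by simp
  from someI_ex[OF this] show "pair (support_form C) x \<le> f x"
    and "pair (support_form C) x = f x \<longleftrightarrow> x \<in> C"
    using assms(2) unfolding support_form_def by blast+
qed

text \<open>Adding a large multiple of \<open>\<rho>\<close> makes every supporting form strictly positive on the
  positive coroots, which is what lets the dominant chamber win the maximum below.\<close>
definition rho_shift :: rat where
  "rho_shift = 1 + (\<Sum>C\<in>Sig. \<Sum>b\<in>Pos. \<bar>pair (support_form C) (coroot b)\<bar> / pair rho (coroot b))"

definition dominant_form :: "('n \<Rightarrow> rat) set \<Rightarrow> 'n \<Rightarrow> rat" where
  "dominant_form C = (\<lambda>i. support_form C i + rho_shift * rho i)"

lemma pair_dominant_form:
  "pair (dominant_form C) x = pair (support_form C) x + rho_shift * pair rho x"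
  unfolding dominant_form_def pair_add_left pair_scale_left ..

lemma finite_Sig: "finite Sig"
  using fan_Sig unfolding fan_def by simp

lemma dominant_form_coroot_pos:
  assumes C: "C \<in> Sig" and b: "b \<in> Pos"
  shows "0 < pair (dominant_form C) (coroot b)"
proof -
  let ?t = "\<lambda>C b. \<bar>pair (support_form C) (coroot b)\<bar> / pair rho (coroot b)"
  have rho_b: "0 < pair rho (coroot b)" using pair_rho_coroot_pos b by blast
  have t_nonneg: "0 \<le> ?t C' b'" if "b' \<in> Pos" for C' b'
    using pair_rho_coroot_pos that by (simp add: less_imp_le)
  have "?t C b \<le> (\<Sum>b'\<in>Pos. ?t C b')"
    by (rule member_le_sum[OF b]) (use t_nonneg finite_Pos in auto)
  also have "\<dots> \<le> (\<Sum>C'\<in>Sig. \<Sum>b'\<in>Pos. ?t C' b')"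
    by (rule member_le_sum[OF C, of "\<lambda>C'. \<Sum>b'\<in>Pos. ?t C' b'"])
       (use t_nonneg finite_Sig in \<open>auto intro: sum_nonneg\<close>)
  finally have "(1 + ?t C b) * pair rho (coroot b) \<le> rho_shift * pair rho (coroot b)"
    unfolding rho_shift_def using rho_b by (intro mult_right_mono) auto
  also have "(1 + ?t C b) * pair rho (coroot b) =
      pair rho (coroot b) + \<bar>pair (support_form C) (coroot b)\<bar>"
    using rho_b by (simp add: field_simps)
  finally show ?thesis unfolding pair_dominant_form using rho_b by linarith
qed

definition extension :: "('n \<Rightarrow> rat) \<Rightarrow> rat" where
  "extension y = Max ((\<lambda>(w, C). pair (dominant_form C) (w y)) ` (W \<times> Sig))"

lemma finite_W_Sig: "finite (W \<times> Sig)"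
  using finite_W finite_Sig by simp

lemma extension_ge: "w \<in> W \<Longrightarrow> C \<in> Sig \<Longrightarrow> pair (dominant_form C) (w y) \<le> extension y"
  unfolding extension_def using finite_W_Sig by (intro Max_ge) force+

lemma extension_attained: "\<exists>w\<in>W. \<exists>C\<in>Sig. extension y = pair (dominant_form C) (w y)"
proof -
  have "Sig \<noteq> {}"
    using Chamber_covered[OF fan_Sig support_Sig, of "\<lambda>i. 0"] by (auto simp: mem_Chamber_iff)
  then have "extension y \<in> (\<lambda>(w, C). pair (dominant_form C) (w y)) ` (W \<times> Sig)"
    unfolding extension_def using finite_W_Sig weyl_group.id by (intro Max_in) auto
  then show ?thesis by auto
qed

lemma extension_dominant:
  assumes z: "z \<in> Chamber"
  shows "extension z = f z + rho_shift * pair rho z"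
proof (rule antisym)
  obtain w C where w: "w \<in> W" and C: "C \<in> Sig" and eq: "extension z = pair (dominant_form C) (w z)"
    using extension_attained by blast
  have "pair (dominant_form C) (w z) \<le> pair (dominant_form C) z"
    using W_pair_le_dominant[OF w z] dominant_form_coroot_pos[OF C] by (simp add: less_imp_le)
  also have "\<dots> \<le> f z + rho_shift * pair rho z"
    using support_form(1)[OF C z] by (simp add: pair_dominant_form)
  finally show "extension z \<le> f z + rho_shift * pair rho z" using eq by simp
next
  obtain C where C: "C \<in> Sig" "z \<in> C" using Chamber_covered[OF fan_Sig support_Sig z] by blast
  then have "f z + rho_shift * pair rho z = pair (dominant_form C) (id z)"
    using support_form(2)[OF C(1) z] by (simp add: pair_dominant_form)
  also have "\<dots> \<le> extension z" using extension_ge[OF weyl_group.id C(1)] .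
  finally show "f z + rho_shift * pair rho z \<le> extension z" .
qed

lemma extension_W_invariant:
  assumes w: "w \<in> W"
  shows "extension (w y) = extension y"
proof (rule antisym)
  show "extension (w y) \<le> extension y"
    using extension_attained[of "w y"] extension_ge[OF W_comp[OF _ w]] by fastforce
next
  obtain w' where w': "w' \<in> W" "w' (w y) = y" using W_invE[OF w] by blast
  show "extension y \<le> extension (w y)"
    using extension_attained[of y] extension_ge[OF W_comp[OF _ w'(1)], of _ _ "w y"] w'(2)
    by fastforce
qed

lemma extension_on_cone:
  assumes C: "C \<in> Sig" and z: "z \<in> C"
  shows "extension z = pair (dominant_form C) z"
proof -
  have "z \<in> Chamber" using cone_subset_Chamber[OF fan_Sig support_Sig C] z by blast
  then show ?thesis
    using support_form(2)[OF C \<open>z \<in> Chamber\<close>] z extension_dominant[OF \<open>z \<in> Chamber\<close>]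
    by (simp add: pair_dominant_form)
qed

text \<open>Strictness: a point \<open>y\<close> where the form of \<open>C\<close> attains the maximum is fixed by the element
  \<open>w\<close> making it dominant (otherwise \<open>w\<close> would strictly increase that form), so \<open>y\<close> is dominant and
  the strict convexity of \<open>f\<close> puts it into \<open>C\<close>.\<close>
lemma extension_eq_imp_mem:
  assumes C: "C \<in> Sig" and eq: "pair (dominant_form C) y = extension y"
  shows "y \<in> C"
proof -
  obtain w where w: "w \<in> W" "w y \<in> Chamber" using W_dominant_exists by blast
  obtain w' where w': "w' \<in> W" "w' (w y) = y" using W_invE[OF w(1)] by blast
  have ext: "extension y = f (w y) + rho_shift * pair rho (w y)"
    using extension_W_invariant[OF w(1)] extension_dominant[OF w(2)] by simp
  then have le: "pair (dominant_form C) (w y) \<le> extension y"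
    using support_form(1)[OF C w(2)] by (simp add: pair_dominant_form)
  have "w y = y"
  proof (rule ccontr)
    assume "w y \<noteq> y"
    then have "pair (dominant_form C) (w' (w y)) < pair (dominant_form C) (w y)"
      using W_pair_less_dominant[OF w'(1) w(2)] dominant_form_coroot_pos[OF C] w'(2) by simp
    then show False using le eq w'(2) by simp
  qed
  then have "y \<in> Chamber" "pair (support_form C) y = f y"
    using w(2) eq ext by (simp_all add: pair_dominant_form)
  then show "y \<in> C" using support_form(2)[OF C] by blast
qed

lemma extension_supporting_form:
  assumes "E \<in> weyl_fan Phi cor Sig"
  shows "\<exists>u. \<forall>y. pair u y \<le> extension y \<and> (pair u y = extension y \<longleftrightarrow> y \<in> E)"
proof -
  obtain w C where w: "w \<in> W" and C: "C \<in> Sig" and E: "E = w ` C"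
    using assms by (rule weyl_fanE[OF fan_Sig support_Sig])
  obtain w' where w': "w' \<in> W" "\<And>x. w' (w x) = x" "\<And>y. w (w' y) = y"
    using W_invE[OF w] by blast
  obtain u where u: "\<forall>y. pair (dominant_form C) (w' y) = pair u y"
    using W_transpose[OF w'(1)] by blast
  have "pair u y \<le> extension y" for y
    using extension_ge[OF w'(1) C, of y] u by simp
  moreover have "pair u y = extension y \<longleftrightarrow> y \<in> E" for y
  proof -
    have "pair u y = extension y \<longleftrightarrow> pair (dominant_form C) (w' y) = extension (w' y)"
      using u extension_W_invariant[OF w'(1)] by simp
    also have "\<dots> \<longleftrightarrow> w' y \<in> C"
      using extension_eq_imp_mem[OF C, of "w' y"] extension_on_cone[OF C, of "w' y"] by auto
    also have "\<dots> \<longleftrightarrow> y \<in> E"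
    proof
      assume "w' y \<in> C"
      then show "y \<in> E" unfolding E by (metis imageI w'(3))
    qed (auto simp: E w'(2))
    finally show ?thesis .
  qed
  ultimately show ?thesis by blast
qed

lemma extension_convex:
  assumes t: "0 \<le> t" "t \<le> 1"
  shows "extension (\<lambda>i. t * x i + (1 - t) * y i) \<le> t * extension x + (1 - t) * extension y"
proof -
  obtain w C where w: "w \<in> W" and C: "C \<in> Sig"
    and eq: "extension (\<lambda>i. t * x i + (1 - t) * y i) =
      pair (dominant_form C) (w (\<lambda>i. t * x i + (1 - t) * y i))"
    using extension_attained by blast
  note eq
  also have "\<dots> = t * pair (dominant_form C) (w x) + (1 - t) * pair (dominant_form C) (w y)"
    using linear_map_W[OF w] unfolding linear_map_def by (simp add: pair_add_right pair_scale_right)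
  also have "\<dots> \<le> t * extension x + (1 - t) * extension y"
    using extension_ge[OF w C] t by (intro add_mono mult_left_mono) auto
  finally show ?thesis .
qed

lemma strictly_convex_pl_extension: "strictly_convex_pl (weyl_fan Phi cor Sig) extension"
  unfolding strictly_convex_pl_def
proof (intro conjI ballI allI impI)
  fix E assume "E \<in> weyl_fan Phi cor Sig"
  then obtain u where u: "\<And>y. pair u y \<le> extension y \<and> (pair u y = extension y \<longleftrightarrow> y \<in> E)"
    using extension_supporting_form by blast
  show "\<exists>u. \<forall>x\<in>E. extension x = pair u x" using u by (metis (full_types))
  show "\<exists>u. \<forall>x\<in>support (weyl_fan Phi cor Sig). pair u x \<le> extension x \<and>
      (pair u x = extension x \<longleftrightarrow> x \<in> E)"
    using u by blast
next
  fix x y and t :: rat assume "0 \<le> t \<and> t \<le> 1"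
  then show "extension (\<lambda>i. t * x i + (1 - t) * y i) \<le> t * extension x + (1 - t) * extension y"
    using extension_convex by blast
qed

end

end

theorem corollary7p3:
  fixes Phi :: "('n::finite \<Rightarrow> int) set"
    and cor :: "('n \<Rightarrow> int) \<Rightarrow> ('n \<Rightarrow> int)"
    and v :: "'n \<Rightarrow> rat"
    and Sig :: "('n \<Rightarrow> rat) set set"
  assumes "reduced_root_datum Phi cor"
    and "regular Phi v"
    and "fan Sig"
    and "\<forall>C\<in>Sig. simplicial_cone C"
    and "support Sig = pos_chamber Phi v"
    and "normal_fan Sig"
  shows "normal_fan (weyl_fan Phi cor Sig)"
proof -
  interpret root_chamber Phi cor v using assms(1,2) by unfold_locales
  obtain f where "strictly_convex_pl Sig f" using assms(6) unfolding normal_fan_def by blast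
  then have "strictly_convex_pl (weyl_fan Phi cor Sig) (extension Sig f)"
    using strictly_convex_pl_extension assms(3,5) by blast
  moreover have "convex_set (support (weyl_fan Phi cor Sig))"
    unfolding support_weyl_fan[OF assms(3,5)] convex_set_def by simp
  ultimately show ?thesis
    unfolding normal_fan_def using fan_weyl_fan[OF assms(3,5)] by blast
qed

end
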